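(* Let $m$ be a positive integer, $r\equiv 1\pmod 4$ a prime, and $p$ a prime whose multiplicative order modulo $r^m$ is $\phi(r^m)/2$. Let $q=p^{\phi(r^m)/2}$ and $f(x)=\mathrm{Tr}_{q/p}\big(x^{(q-1)/r^m}\big)$ for $x\in\mathbb{F}_q$. Then: (i) the partition $\{D^*_{f,i}\}_{i\in f(\mathbb{F}_q^* )}$ induces a $2$-class association scheme if and only if $|f(\mathbb{F}_q^* )|=2$, and this holds if and only if $r\equiv 1\pmod p$; (ii) it induces a $3$-class association scheme if and only if $|f(\mathbb{F}_q^* )|=3$, and this holds if and only if $r\not\equiv1\pmod p$ and $m=1$; (iii) it induces a $4$-class association scheme if and only if $|f(\mathbb{F}_q^* )|=4$, and this holds if and only if $r\not\equiv1\pmod p$ and $m>1$.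
   Context: $\phi$ is Euler's function and $\mathrm{Tr}_{q/p}$ the trace from $\mathbb{F}_q$ to $\mathbb{F}_p$. For $i\in\mathbb{F}_p$, $D_{f,i}=\{x\in\mathbb{F}_q:f(x)=i\}$, $D^*_{f,i}=D_{f,i}\setminus\{0\}$, $f(\mathbb{F}_q^* )=\{f(x):x\ne0\}$. Relations on $\mathbb{F}_q$: the diagonal $R_{-1}$, and for $i\in f(\mathbb{F}_q^* )$, $(\alpha,\beta)\in R_i$ iff $\alpha-\beta\in D^*_{f,i}$. The partition induces a $d$-class association scheme if these relations form a symmetric association scheme on $\mathbb{F}_q$ (each relation symmetric, and for any three relations $R_a,R_b,R_c$ the number $|\{w:(u,w)\in R_a,(w,v)\in R_b\}|$ is constant over $(u,v)\in R_c$) and $d=|f(\mathbb{F}_q^* )|$. *)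

theory Defs
  imports "HOL-Number_Theory.Number_Theory"
begin

definition trace_Fp :: "nat \<Rightarrow> nat \<Rightarrow> 'a::field \<Rightarrow> 'a" where
  "trace_Fp p k y = (\<Sum>j<k. y ^ (p ^ j))"

text \<open>Relations of the partition: None is the diagonal R_{-1};
  Some i is R_i = {(a,b). a - b in D*_{f,i}}.\<close>
definition scheme_rel :: "('a::ab_group_add \<Rightarrow> 'b) \<Rightarrow> 'b option \<Rightarrow> ('a \<times> 'a) set" where
  "scheme_rel f c = (case c of None \<Rightarrow> Id
      | Some i \<Rightarrow> {(a, b). a - b \<noteq> 0 \<and> f (a - b) = i})"

definition scheme_idx :: "('a::ab_group_add \<Rightarrow> 'b) \<Rightarrow> 'b option set" where
  "scheme_idx f = insert None (Some ` (f ` (UNIV - {0})))"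

definition induces_assoc_scheme :: "('a::{finite,ab_group_add} \<Rightarrow> 'b) \<Rightarrow> nat \<Rightarrow> bool" where
  "induces_assoc_scheme f d \<longleftrightarrow>
     (\<forall>a\<in>scheme_idx f. sym (scheme_rel f a)) \<and>
     (\<forall>a\<in>scheme_idx f. \<forall>b\<in>scheme_idx f. \<forall>c\<in>scheme_idx f. \<exists>n::nat.
        \<forall>u v. (u, v) \<in> scheme_rel f c \<longrightarrow>
          card {w. (u, w) \<in> scheme_rel f a \<and> (w, v) \<in> scheme_rel f b} = n) \<and>
     d = card (f ` (UNIV - {0}))"

end

theory Submission
  imports Defs "HOL-Computational_Algebra.Polynomial"
begin

text \<open>
  Write \<open>q = Q\<^sup>2\<close>. Since \<open>p\<close> has order \<open>k = \<phi>(r\<^sup>m)/2\<close> modulo \<open>r\<^sup>m\<close>, the square root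
  \<open>Q = p\<^sup>k\<^sup>/\<^sup>2\<close> of \<open>p\<^sup>k \<equiv> 1\<close> is \<open>Q \<equiv> -1 (mod r\<^sup>m)\<close>; hence \<open>Q - 1\<close> divides \<open>(q - 1)/r\<^sup>m\<close> and
  \<open>f\<close> is constant on the cosets of \<open>\<bbbF>\<^sub>Q\<^sup>*\<close>. As \<open>\<bbbF>\<^sub>q\<close> is a plane over \<open>\<bbbF>\<^sub>Q\<close>, any partition of
  \<open>\<bbbF>\<^sub>q\<^sup>*\<close> into unions of punctured lines through \<open>0\<close> is a symmetric association scheme:
  the number of ways to write \<open>u = x + y\<close> with \<open>x, y\<close> in prescribed classes depends only on
  the class of \<open>u\<close>, because two distinct lines span the plane. So everything reduces to the
  size of the value set \<open>f(\<bbbF>\<^sub>q\<^sup>*) = Tr(\<mu>\<^bsub>r\<^sup>m\<^esub>)\<close>. Here \<open>Tr 1 = k\<close>; for \<open>z\<close> of order \<open>r\<close> the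
  Frobenius orbit of \<open>z\<close> is \<open>{z\<^sup>a | a a quadratic residue mod r}\<close>, traversed \<open>r\<^sup>m\<^sup>-\<^sup>1\<close> times, so
  \<open>Tr z = r\<^sup>m\<^sup>-\<^sup>1 \<eta>\<close> for one of the two Gaussian periods \<open>\<eta>\<close>, the roots of \<open>(2\<eta> + 1)\<^sup>2 = r\<close>;
  for \<open>z\<close> of higher order a power of Frobenius multiplies \<open>z\<close> by a primitive \<open>r\<close>-th root of
  unity, which forces \<open>Tr z = 0\<close>. Comparing these values in characteristic \<open>p\<close> gives the
  three cases.
\<close>

section \<open>Powers and roots of unity in finite fields\<close>

lemma finite_power_eq: "n > 0 \<Longrightarrow> finite {x::'a::field. x ^ n = c}"
  and card_power_eq_le: "n > 0 \<Longrightarrow> card {x::'a::field. x ^ n = c} \<le> n"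
proof -
  assume n: "n > 0"
  define P where "P = monom (1::'a) n + [:-c:]"
  have deg: "degree P = n"
    unfolding P_def using n by (subst degree_add_eq_left) (auto simp: degree_monom_eq)
  hence P: "P \<noteq> 0" using n by auto
  have roots: "{x. x ^ n = c} = {x. poly P x = 0}"
    unfolding P_def by (auto simp: poly_monom)
  show "finite {x::'a. x ^ n = c}" using poly_roots_finite[OF P] roots by simp
  show "card {x::'a. x ^ n = c} \<le> n" using card_poly_roots_bound[OF P] roots deg by simp
qed

lemma finite_field_power_card_minus_one:
  fixes x :: "'a::{finite,field}"
  assumes "x \<noteq> 0"
  shows "x ^ (card (UNIV :: 'a set) - 1) = 1"
proof -
  have "x ^ (card (UNIV :: 'a set) - 1) * \<Prod>(UNIV - {0}) = (\<Prod>y\<in>UNIV - {0}. x * y)"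
    by (simp add: prod.distrib)
  also have "\<dots> = \<Prod>(UNIV - {0})"
    by (rule prod.reindex_bij_witness[of _ "\<lambda>y. y / x" "\<lambda>y. x * y"]) (use assms in auto)
  finally show ?thesis by simp
qed

lemma finite_field_power_card:
  fixes x :: "'a::{finite,field}"
  shows "x ^ card (UNIV :: 'a set) = x"
proof (cases "x = 0")
  case False
  have "card (UNIV :: 'a set) = Suc (card (UNIV :: 'a set) - 1)"
    using finite_UNIV_card_ge_0[where ?'a = 'a] by simp
  hence "x ^ card (UNIV :: 'a set) = x * x ^ (card (UNIV :: 'a set) - 1)"
    by (metis power_Suc)
  thus ?thesis using finite_field_power_card_minus_one[OF False] by simp
qed (simp add: finite_UNIV_card_ge_0)

lemma card_nonzero_le_card_image_power:
  fixes t :: nat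
  assumes "t > 0"
  shows "card (UNIV :: 'a::{finite,field} set) - 1 \<le> card ((\<lambda>x::'a. x ^ t) ` (UNIV - {0})) * t"
proof -
  define S :: "'a set" where "S = UNIV - {0}"
  have "S = (\<Union>c\<in>(\<lambda>x. x ^ t) ` S. {x \<in> S. x ^ t = c})" by auto
  hence "card S \<le> (\<Sum>c\<in>(\<lambda>x. x ^ t) ` S. card {x \<in> S. x ^ t = c})"
    by (metis card_UN_le finite)
  also have "\<dots> \<le> (\<Sum>c\<in>(\<lambda>x. x ^ t) ` S. t)"
    by (intro sum_mono order.trans[OF card_mono card_power_eq_le[OF assms]]) auto
  finally show ?thesis unfolding S_def by (simp add: card_Diff_singleton)
qed

lemma image_power_eq_roots_of_unity:
  assumes "t * n = card (UNIV :: 'a::{finite,field} set) - 1"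
  shows "(\<lambda>x::'a. x ^ t) ` (UNIV - {0}) = {z. z ^ n = 1}"
    and "card {z::'a. z ^ n = 1} = n"
proof -
  have q: "card (UNIV :: 'a set) \<ge> 2"
    using card_mono[of UNIV "{0, 1 :: 'a}"] by simp
  hence tn: "t > 0" "n > 0" using assms by (auto intro: gr0I)
  have sub: "(\<lambda>x::'a. x ^ t) ` (UNIV - {0}) \<subseteq> {z. z ^ n = 1}"
    using finite_field_power_card_minus_one by (auto simp: assms simp flip: power_mult)
  have "t * n \<le> card ((\<lambda>x::'a. x ^ t) ` (UNIV - {0})) * t"
    using card_nonzero_le_card_image_power[OF tn(1), where 'a='a] assms by simp
  hence "n \<le> card ((\<lambda>x::'a. x ^ t) ` (UNIV - {0}))"
    using tn by (simp add: mult.commute)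
  moreover have "card {z::'a. z ^ n = 1} \<le> n" by (rule card_power_eq_le[OF tn(2)])
  ultimately show "(\<lambda>x::'a. x ^ t) ` (UNIV - {0}) = {z. z ^ n = 1}"
    using sub by (intro card_seteq) (auto intro: order.trans)
  with \<open>n \<le> _\<close> \<open>card {z::'a. z ^ n = 1} \<le> n\<close> show "card {z::'a. z ^ n = 1} = n" by simp
qed

lemma sum_lessThan_mult_mod:
  fixes g :: "nat \<Rightarrow> 'a::semiring_1"
  shows "(\<Sum>j<c * n. g (j mod n)) = of_nat c * (\<Sum>j<n. g j)"
proof (induction c)
  case (Suc c)
  have split: "{..<Suc c * n} = {..<c * n} \<union> {0 + c * n..<n + c * n}" by auto
  have "(\<Sum>j<Suc c * n. g (j mod n)) = (\<Sum>j<c * n. g (j mod n)) + (\<Sum>j\<in>{0 + c * n..<n + c * n}. g (j mod n))"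
    unfolding split by (rule sum.union_disjoint) auto
  also have "(\<Sum>j\<in>{0 + c * n..<n + c * n}. g (j mod n)) = (\<Sum>j\<in>{0..<n}. g ((j + c * n) mod n))"
    by (rule sum.shift_bounds_nat_ivl)
  also have "\<dots> = (\<Sum>j<n. g j)" by (rule sum.cong) auto
  finally show ?case using Suc by (simp add: algebra_simps)
qed simp

lemma power_gcd_eq_one:
  fixes z :: "'a::comm_monoid_mult"
  assumes "z ^ a = 1" "z ^ b = 1"
  shows "z ^ gcd a b = 1"
proof (cases "a = 0")
  case False
  then obtain x y where xy: "a * x = b * y + gcd a b" using bezout_nat by blast
  have "1 = z ^ (a * x)" by (simp add: power_mult assms)
  also have "\<dots> = z ^ gcd a b" by (simp add: xy power_add power_mult assms)
  finally show ?thesis by simp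
qed (use assms in simp)

lemma power_mod_if_power_eq_one:
  fixes z :: "'a::monoid_mult"
  assumes "z ^ n = 1"
  shows "z ^ m = z ^ (m mod n)"
proof -
  have "z ^ m = (z ^ n) ^ (m div n) * z ^ (m mod n)"
    by (simp flip: power_mult power_add)
  thus ?thesis using assms by simp
qed

lemma power_eq_one_iff_prime_dvd:
  fixes z :: "'a::comm_monoid_mult"
  assumes "prime r" "z ^ r = 1" "z \<noteq> 1"
  shows "z ^ n = 1 \<longleftrightarrow> r dvd n"
proof
  assume "z ^ n = 1"
  hence "z ^ gcd n r = 1" using power_gcd_eq_one assms(2) by blast
  moreover have "gcd n r dvd r" by simp
  hence "gcd n r = 1 \<or> gcd n r = r" using assms(1) by (meson prime_nat_iff)
  ultimately have "gcd n r = r" using assms(3) by auto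
  thus "r dvd n" by (metis gcd_dvd1)
qed (use assms(2) in \<open>auto simp: power_mult\<close>)

lemma prime_power_dvd_if_power_eq_one:
  fixes z :: "'a::comm_monoid_mult"
  assumes "prime r" "z ^ (r ^ Suc j) = 1" "z ^ (r ^ j) \<noteq> 1" "z ^ a = 1"
  shows "r ^ Suc j dvd a"
proof -
  have "gcd a (r ^ Suc j) dvd r ^ Suc j" by simp
  then obtain i where i: "i \<le> Suc j" "gcd a (r ^ Suc j) = r ^ i"
    using divides_primepow_nat[OF assms(1)] by blast
  have g: "z ^ r ^ i = 1" using power_gcd_eq_one[OF assms(4,2)] i by simp
  have "i = Suc j"
  proof (rule ccontr)
    assume "i \<noteq> Suc j"
    hence "r ^ j = r ^ i * r ^ (j - i)" using i by (simp flip: power_add)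
    hence "z ^ r ^ j = 1" using g by (simp add: power_mult)
    thus False using assms(3) by simp
  qed
  thus ?thesis using i by (metis gcd_dvd1)
qed

lemma cong_one_prime_power_lift:
  fixes a r j :: nat
  assumes "prime r" "j > 0" "[a = 1] (mod r ^ j)"
  shows "[a ^ r ^ i = 1] (mod r ^ (j + i))"
proof (induction i)
  case (Suc i)
  define b where "b = a ^ r ^ i"
  have b1: "[int b = 1] (mod int r ^ (j + i))"
    using Suc by (simp add: b_def flip: cong_int_iff)
  hence "[int b = 1] (mod int r)"
    using assms(2) by (metis cong_dvd_modulus dvd_power add_gr_0)
  hence "[(\<Sum>l<r. int b ^ l) = (\<Sum>l<r. 1)] (mod int r)"
    by (intro cong_sum) (metis cong_pow power_one)
  hence "int r dvd (\<Sum>l<r. int b ^ l)"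
    by (simp add: cong_0_iff[symmetric] cong_def)
  moreover have "int r ^ (j + i) dvd int b - 1"
    using b1 by (simp add: cong_iff_dvd_diff)
  ultimately have "int r ^ (j + i) * int r dvd (int b - 1) * (\<Sum>l<r. int b ^ l)"
    by (intro mult_dvd_mono)
  hence "[int b ^ r = 1] (mod int r ^ (j + Suc i))"
    by (simp add: cong_iff_dvd_diff power_diff_1_eq mult.commute)
  thus ?case
    by (simp add: b_def power_mult[symmetric] mult.commute flip: cong_int_iff)
qed (use assms in simp)

lemma exact_prime_power_order:
  fixes z :: "'a::monoid_mult"
  assumes "z ^ r ^ m = 1" "z ^ r \<noteq> 1"
  obtains j where "2 \<le> j" "j \<le> m" "z ^ r ^ j = 1" "z ^ r ^ (j - 1) \<noteq> 1"
proof -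
  define j where "j = (LEAST j. z ^ r ^ j = 1)"
  have j: "z ^ r ^ j = 1" "j \<le> m" unfolding j_def using assms(1) by (rule LeastI, rule Least_le)
  have "j \<noteq> 0"
  proof
    assume "j = 0"
    hence "z = 1" using j(1) by simp
    thus False using assms(2) by simp
  qed
  moreover have "j \<noteq> 1" using j(1) assms(2) by auto
  ultimately have "2 \<le> j" by simp
  moreover have "j - 1 < j" using \<open>j \<noteq> 0\<close> by simp
  hence "z ^ r ^ (j - 1) \<noteq> 1" unfolding j_def by (rule not_less_Least)
  ultimately show thesis using that j by blast
qed

lemma roots_of_unity_prime_eq_powers:
  fixes \<xi> z :: "'a::field"
  assumes r: "prime r" and \<xi>: "\<xi> ^ r = 1" "\<xi> \<noteq> 1" and z: "z ^ r = 1"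
  shows "\<exists>a<r. z = \<xi> ^ a"
proof -
  have "\<xi> \<noteq> 0" using \<xi>(1) prime_gt_0_nat[OF r] by (auto simp: zero_power)
  have eq: "a = b" if "a \<le> b" "b < r" "\<xi> ^ a = \<xi> ^ b" for a b
  proof -
    have "\<xi> ^ a * \<xi> ^ (b - a) = \<xi> ^ b" using that(1) by (simp flip: power_add)
    hence "\<xi> ^ a * \<xi> ^ (b - a) = \<xi> ^ a * 1" using that(3) by simp
    hence "r dvd b - a" using power_eq_one_iff_prime_dvd[OF r \<xi>] \<open>\<xi> \<noteq> 0\<close> by simp
    thus "a = b" using that by (auto dest: dvd_imp_le)
  qed
  have "inj_on (\<lambda>a. \<xi> ^ a) {..<r}"
  proof (rule inj_onI)
    fix a b assume "a \<in> {..<r}" "b \<in> {..<r}" "\<xi> ^ a = \<xi> ^ b"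
    thus "a = b" using eq[of a b] eq[of b a] by (cases "a \<le> b") auto
  qed
  hence "card ((\<lambda>a. \<xi> ^ a) ` {..<r}) = r" by (simp add: card_image)
  moreover have "(\<lambda>a. \<xi> ^ a) ` {..<r} \<subseteq> {z. z ^ r = 1}"
  proof (rule image_subsetI)
    fix a
    have "(\<xi> ^ a) ^ r = (\<xi> ^ r) ^ a" by (simp only: power_mult[symmetric] mult.commute)
    thus "\<xi> ^ a \<in> {z. z ^ r = 1}" using \<xi>(1) by simp
  qed
  moreover have "finite {z::'a. z ^ r = 1}" "card {z::'a. z ^ r = 1} \<le> r"
    using finite_power_eq card_power_eq_le prime_gt_0_nat[OF r] by blast+
  ultimately have "(\<lambda>a. \<xi> ^ a) ` {..<r} = {z. z ^ r = 1}"
    by (metis card_seteq)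
  thus ?thesis using z by auto
qed

lemma finite_field_prime_CHAR: "prime CHAR('a::{finite,field})"
  by (rule prime_CHAR_semidom[OF finite_imp_CHAR_pos]) simp

lemma finite_field_CHAR_eq:
  assumes "prime p" "card (UNIV :: 'a::{finite,field} set) = p ^ k"
  shows "CHAR('a) = p"
proof -
  have "CHAR('a) dvd p ^ k" using CHAR_dvd_CARD[where 'a='a] assms(2) by simp
  hence "CHAR('a) dvd p" using finite_field_prime_CHAR prime_dvd_power by blast
  thus ?thesis using finite_field_prime_CHAR assms(1) primes_dvd_imp_eq by blast
qed

lemma frobenius_power_add:
  fixes x y :: "'a::{finite,field}"
  assumes "Q = CHAR('a) ^ j"
  shows "(x + y) ^ Q = x ^ Q + y ^ Q"
  using freshmans_dream'[OF finite_field_prime_CHAR assms] .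

lemma frobenius_power_uminus:
  fixes x :: "'a::{finite,field}"
  assumes "Q = CHAR('a) ^ j"
  shows "(- x) ^ Q = - (x ^ Q)"
proof -
  have "Q > 0" using assms finite_field_prime_CHAR[where 'a='a] prime_gt_0_nat by simp
  hence "x ^ Q + (- x) ^ Q = 0" by (simp flip: frobenius_power_add[OF assms])
  thus ?thesis by (simp add: eq_neg_iff_add_eq_0 add.commute)
qed

section \<open>Association schemes from a quadratic subfield\<close>

definition diff_class :: "('a::ab_group_add \<Rightarrow> 'b) \<Rightarrow> 'b option \<Rightarrow> 'a set" where
  "diff_class f c = {z. (z, 0) \<in> scheme_rel f c}"

lemma diff_class_None: "diff_class f None = {0}"
  and diff_class_Some: "diff_class f (Some i) = {z. z \<noteq> 0 \<and> f z = i}"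
  unfolding diff_class_def scheme_rel_def by auto

lemma scheme_rel_iff: "(u, w) \<in> scheme_rel f c \<longleftrightarrow> u - w \<in> diff_class f c"
  unfolding diff_class_def scheme_rel_def by (cases c) auto

definition conv_count :: "'a::ab_group_add set \<Rightarrow> 'a set \<Rightarrow> 'a \<Rightarrow> nat" where
  "conv_count X Y u = card {y \<in> Y. u - y \<in> X}"

lemma card_scheme_paths:
  "card {w. (u, w) \<in> scheme_rel f a \<and> (w, v) \<in> scheme_rel f b}
     = conv_count (diff_class f a) (diff_class f b) (u - v)"
proof -
  have "{w. (u, w) \<in> scheme_rel f a \<and> (w, v) \<in> scheme_rel f b}
      = (\<lambda>y. y + v) ` {y \<in> diff_class f b. (u - v) - y \<in> diff_class f a}"
  proof (rule equalityI)
    show "{w. (u, w) \<in> scheme_rel f a \<and> (w, v) \<in> scheme_rel f b}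
      \<subseteq> (\<lambda>y. y + v) ` {y \<in> diff_class f b. (u - v) - y \<in> diff_class f a}"
    proof
      fix w assume "w \<in> {w. (u, w) \<in> scheme_rel f a \<and> (w, v) \<in> scheme_rel f b}"
      thus "w \<in> (\<lambda>y. y + v) ` {y \<in> diff_class f b. (u - v) - y \<in> diff_class f a}"
        by (intro image_eqI[of _ _ "w - v"]) (auto simp: scheme_rel_iff)
    qed
  qed (auto simp: scheme_rel_iff diff_diff_eq add.commute)
  moreover have "inj (\<lambda>y. y + v)" by (simp add: inj_on_def)
  ultimately show ?thesis unfolding conv_count_def by (simp add: card_image inj_on_subset)
qed

lemma conv_count_singleton_zero:
  "conv_count {0} Y u = (if u \<in> Y then 1 else 0)"
  "conv_count X {0} u = (if u \<in> X then 1 else 0)"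
proof -
  have "{y \<in> Y. u - y \<in> {0}} = (if u \<in> Y then {u} else {})"
    "{y \<in> {0}. u - y \<in> X} = (if u \<in> X then {0} else {})" by auto
  thus "conv_count {0} Y u = (if u \<in> Y then 1 else 0)"
    "conv_count X {0} u = (if u \<in> X then 1 else 0)" unfolding conv_count_def by simp_all
qed

locale quadratic_subfield =
  fixes E :: "'a::{finite,field} set"
  assumes zero_mem: "0 \<in> E" and one_mem: "1 \<in> E"
    and add_mem: "a \<in> E \<Longrightarrow> b \<in> E \<Longrightarrow> a + b \<in> E"
    and uminus_mem: "a \<in> E \<Longrightarrow> - a \<in> E"
    and mult_mem: "a \<in> E \<Longrightarrow> b \<in> E \<Longrightarrow> a * b \<in> E"
    and inverse_mem: "a \<in> E \<Longrightarrow> inverse a \<in> E"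
    and card_square: "card E * card E = card (UNIV :: 'a set)"
begin

lemma diff_mem: "a \<in> E \<Longrightarrow> b \<in> E \<Longrightarrow> a - b \<in> E"
  using add_mem uminus_mem by (metis diff_conv_add_uminus)

lemma divide_mem: "a \<in> E \<Longrightarrow> b \<in> E \<Longrightarrow> a / b \<in> E"
  using mult_mem inverse_mem by (simp add: divide_inverse)

lemma card_ge_2: "card E \<ge> 2"
  using card_mono[of E "{0, 1}"] zero_mem one_mem by simp

definition line :: "'a \<Rightarrow> 'a set" where
  "line u = (\<lambda>c. c * u) ` E"

lemma mem_line_iff: "x \<in> line u \<longleftrightarrow> (\<exists>c\<in>E. x = c * u)"
  unfolding line_def by auto

lemma line_sym: "u \<noteq> 0 \<Longrightarrow> y \<noteq> 0 \<Longrightarrow> y \<in> line u \<Longrightarrow> u \<in> line y"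
proof -
  assume "u \<noteq> 0" "y \<noteq> 0" "y \<in> line u"
  then obtain c where "c \<in> E" "y = c * u" "c \<noteq> 0" using mem_line_iff by auto
  hence "u = inverse c * y" by simp
  thus ?thesis using \<open>c \<in> E\<close> inverse_mem mem_line_iff by blast
qed

lemma spanning_pair:
  assumes "x \<noteq> 0" "y \<notin> line x"
  shows "\<exists>a\<in>E. \<exists>b\<in>E. u = a * x + b * y"
proof -
  define g where "g = (\<lambda>(a, b). a * x + b * y)"
  have "inj_on g (E \<times> E)"
  proof (rule inj_onI, clarify)
    fix a b a' b' assume mem: "a \<in> E" "b \<in> E" "a' \<in> E" "b' \<in> E" and "g (a, b) = g (a', b')"
    hence eq: "(b - b') * y = (a' - a) * x" unfolding g_def by (simp add: algebra_simps)
    have "b = b'"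
    proof (rule ccontr)
      assume "b \<noteq> b'"
      hence "y = ((a' - a) / (b - b')) * x" using eq by (simp add: field_simps)
      thus False using assms(2) mem diff_mem divide_mem mem_line_iff by blast
    qed
    thus "a = a' \<and> b = b'" using eq assms(1) by simp
  qed
  hence "card (g ` (E \<times> E)) = card (UNIV :: 'a set)"
    by (simp add: card_image card_cartesian_product card_square)
  hence "g ` (E \<times> E) = UNIV" by (intro card_subset_eq) auto
  hence "u \<in> g ` (E \<times> E)" by simp
  then obtain a b where "a \<in> E" "b \<in> E" "u = g (a, b)" by auto
  thus ?thesis unfolding g_def by auto
qed

definition scaling_closed :: "'a set \<Rightarrow> bool" where
  "scaling_closed S \<longleftrightarrow> (\<forall>c\<in>E - {0}. \<forall>x\<in>S. c * x \<in> S)"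

lemma scaling_closed_mem_iff:
  assumes "scaling_closed S" "c \<in> E" "c \<noteq> 0"
  shows "c * x \<in> S \<longleftrightarrow> x \<in> S"
proof
  assume "c * x \<in> S"
  hence "inverse c * (c * x) \<in> S"
    using assms inverse_mem unfolding scaling_closed_def by simp
  thus "x \<in> S" using assms by (simp add: field_simps)
qed (use assms in \<open>auto simp: scaling_closed_def\<close>)

lemma scaling_closed_line: "scaling_closed (line u)"
  unfolding scaling_closed_def line_def by (auto intro: mult_mem simp: mult.assoc)

lemma scaling_closed_Diff: "scaling_closed S \<Longrightarrow> scaling_closed L \<Longrightarrow> scaling_closed (S - L)"
  using scaling_closed_mem_iff[of L] unfolding scaling_closed_def by auto

lemma scaling_closed_Int: "scaling_closed S \<Longrightarrow> scaling_closed L \<Longrightarrow> scaling_closed (S \<inter> L)"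
  unfolding scaling_closed_def by blast

lemma card_Diff_line:
  assumes "scaling_closed S" "0 \<notin> S" "u \<noteq> 0"
  shows "card (S - line u) + (if u \<in> S then card E - 1 else 0) = card S"
proof -
  have "S \<inter> line u = (if u \<in> S then (\<lambda>c. c * u) ` (E - {0}) else {})"
  proof -
    have "c * u \<in> S \<longleftrightarrow> c \<noteq> 0 \<and> u \<in> S" if "c \<in> E" for c
      using assms scaling_closed_mem_iff[OF assms(1) that] by (cases "c = 0") auto
    thus ?thesis unfolding line_def by auto
  qed
  hence "card (S \<inter> line u) = (if u \<in> S then card E - 1 else 0)"
    using assms(3) zero_mem by (simp add: card_image inj_on_def card_Diff_singleton)
  moreover have "card (S - line u) + card (S \<inter> line u) = card S"
    by (simp add: card_Diff_subset_Int card_mono)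
  ultimately show ?thesis by simp
qed

lemma scaled_mem_iff:
  assumes "scaling_closed S" "0 \<notin> S" "c \<in> E"
  shows "c * u \<in> S \<longleftrightarrow> c \<noteq> 0 \<and> u \<in> S"
  using assms scaling_closed_mem_iff[OF assms(1,3)] by (cases "c = 0") auto

lemma card_solutions_on_line:
  assumes X: "scaling_closed X" "0 \<notin> X" and Y: "scaling_closed Y" "0 \<notin> Y" and u: "u \<noteq> 0"
  shows "card {y \<in> Y. u - y \<in> X \<and> y \<in> line u} = (if u \<in> X \<and> u \<in> Y then card E - 2 else 0)"
proof -
  have "{y \<in> Y. u - y \<in> X \<and> y \<in> line u} = (\<lambda>c. c * u) ` {c \<in> E. c * u \<in> Y \<and> (1 - c) * u \<in> X}"
    unfolding line_def by (auto simp: algebra_simps)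
  also have "{c \<in> E. c * u \<in> Y \<and> (1 - c) * u \<in> X} = (if u \<in> X \<and> u \<in> Y then E - {0, 1} else {})"
  proof -
    have "c * u \<in> Y \<and> (1 - c) * u \<in> X \<longleftrightarrow> c \<noteq> 0 \<and> c \<noteq> 1 \<and> u \<in> X \<and> u \<in> Y" if "c \<in> E" for c
      using scaled_mem_iff[OF Y that] scaled_mem_iff[OF X diff_mem[OF one_mem that]] by auto
    thus ?thesis by auto
  qed
  finally show ?thesis
    using u zero_mem one_mem by (simp add: card_image inj_on_def card_Diff_subset numeral_2_eq_2)
qed

definition off_line_solutions :: "'a set \<Rightarrow> 'a set \<Rightarrow> 'a \<Rightarrow> 'a set" where
  "off_line_solutions X Y u = {y \<in> Y. u - y \<in> X \<and> y \<notin> line u}"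

definition off_line_pairs :: "'a set \<Rightarrow> 'a set \<Rightarrow> 'a \<Rightarrow> ('a \<times> 'a) set" where
  "off_line_pairs X Y u = Sigma (Y - line u) (\<lambda>y. X - line u - line y)"

lemma card_off_line_pairs:
  assumes X: "scaling_closed X" "0 \<notin> X" and Y: "scaling_closed Y" "0 \<notin> Y"
  shows "card (off_line_pairs X Y u) + (card E - 1) * card (X \<inter> Y - line u)
         = card (Y - line u) * card (X - line u)"
proof -
  define A where "A = X - line u"
  have A: "scaling_closed A" "0 \<notin> A"
    unfolding A_def using scaling_closed_Diff[OF X(1) scaling_closed_line] X(2) by auto
  have "card (off_line_pairs X Y u) + (\<Sum>y\<in>Y - line u. if y \<in> X then card E - 1 else 0)
      = (\<Sum>y\<in>Y - line u. card (A - line y) + (if y \<in> X then card E - 1 else 0))"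
    unfolding off_line_pairs_def A_def by (simp add: sum.distrib)
  also have "\<dots> = (\<Sum>y\<in>Y - line u. card A)"
  proof (rule sum.cong[OF refl])
    fix y assume y: "y \<in> Y - line u"
    hence "y \<noteq> 0" "y \<in> A \<longleftrightarrow> y \<in> X" using Y unfolding A_def by auto
    thus "card (A - line y) + (if y \<in> X then card E - 1 else 0) = card A"
      using card_Diff_line[OF A, of y] by simp
  qed
  moreover have "(\<Sum>y\<in>Y - line u. if y \<in> X then card E - 1 else 0) = (card E - 1) * card ((Y - line u) \<inter> {y. y \<in> X})"
    by (simp add: sum.If_cases)
  moreover have "(Y - line u) \<inter> {y. y \<in> X} = X \<inter> Y - line u" by auto
  ultimately show ?thesis unfolding A_def by (simp add: mult.commute)
qed

lemma not_mem_line_off_line_solution: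
  assumes "0 \<notin> Y" "u \<noteq> 0" "y \<in> off_line_solutions X Y u"
  shows "u \<notin> line y"
  using assms line_sym[of y u] unfolding off_line_solutions_def by auto

text \<open>Scaling an off-line solution \<open>y\<close> by \<open>(a, b) \<in> E\<^sup>* \<times> E\<^sup>*\<close> gives the off-line pair
  \<open>(b y, a (u - y))\<close>; since two independent vectors span the plane, every off-line pair arises
  in exactly one way.\<close>
definition scale_pair :: "'a \<Rightarrow> ('a \<times> 'a) \<times> 'a \<Rightarrow> 'a \<times> 'a" where
  "scale_pair u = (\<lambda>((a, b), y). (b * y, a * (u - y)))"

lemma inj_on_scale_pair:
  assumes Y: "0 \<notin> Y" and u: "u \<noteq> 0"
  shows "inj_on (scale_pair u) (((E - {0}) \<times> (E - {0})) \<times> off_line_solutions X Y u)"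
proof (rule inj_onI)
  fix z z' assume dom: "z \<in> ((E - {0}) \<times> (E - {0})) \<times> off_line_solutions X Y u"
    "z' \<in> ((E - {0}) \<times> (E - {0})) \<times> off_line_solutions X Y u" and "scale_pair u z = scale_pair u z'"
  moreover obtain a b y a' b' y' where zz: "z = ((a, b), y)" "z' = ((a', b'), y')"
    by (metis prod.collapse)
  ultimately have m: "a \<in> E" "b \<in> E" "a' \<in> E" "b' \<in> E" "a \<noteq> 0" "b \<noteq> 0" "a' \<noteq> 0" "b' \<noteq> 0"
    and y: "y \<in> off_line_solutions X Y u" and "scale_pair u ((a, b), y) = scale_pair u ((a', b'), y')"
    by auto
  hence e1: "b * y = b' * y'" and e2: "a * (u - y) = a' * (u - y')" unfolding scale_pair_def by auto
  have y'y: "y' = (b / b') * y" using e1 m by (simp add: field_simps)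
  have "a = a'"
  proof (rule ccontr)
    assume "a \<noteq> a'"
    hence "u = ((a - a' * (b / b')) / (a - a')) * y" using e2 y'y by (simp add: field_simps)
    hence "u \<in> line y" using m mem_line_iff by (metis diff_mem divide_mem mult_mem)
    thus False using not_mem_line_off_line_solution[OF Y u y] by simp
  qed
  moreover hence "y = y'" using e2 m by simp
  moreover hence "b = b'" using e1 y Y unfolding off_line_solutions_def by auto
  ultimately show "z = z'" using zz by simp
qed

lemma scale_pair_mem_off_line_pairs:
  assumes X: "scaling_closed X" and Y: "scaling_closed Y" "0 \<notin> Y" and u: "u \<noteq> 0"
    and m: "a \<in> E" "b \<in> E" "a \<noteq> 0" "b \<noteq> 0" and y: "y \<in> off_line_solutions X Y u"
  shows "scale_pair u ((a, b), y) \<in> off_line_pairs X Y u"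
proof -
  have y': "y \<in> Y" "u - y \<in> X" "y \<notin> line u" "u \<notin> line y"
    using y not_mem_line_off_line_solution[OF Y(2) u y] unfolding off_line_solutions_def by auto
  have "u - y \<notin> line u"
    using y'(3) line_def diff_mem[OF one_mem] by (force simp: algebra_simps)
  moreover have "a * (u - y) \<notin> line (b * y)"
  proof
    assume "a * (u - y) \<in> line (b * y)"
    then obtain c where "c \<in> E" "a * (u - y) = c * (b * y)" using mem_line_iff by blast
    hence "u = (c * b / a + 1) * y" "c * b / a + 1 \<in> E"
      using m by (auto simp: field_simps intro!: add_mem mult_mem divide_mem one_mem)
    thus False using y'(4) mem_line_iff by blast
  qed
  ultimately show ?thesis
    using y' m X Y scaling_closed_mem_iff[OF scaling_closed_line]
    unfolding scale_pair_def off_line_pairs_def scaling_closed_def by auto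
qed

lemma off_line_pair_in_image_scale_pair:
  assumes X: "scaling_closed X" "0 \<notin> X" and Y: "scaling_closed Y" "0 \<notin> Y" and u: "u \<noteq> 0"
    and w: "(y0, x0) \<in> off_line_pairs X Y u"
  shows "(y0, x0) \<in> scale_pair u ` (((E - {0}) \<times> (E - {0})) \<times> off_line_solutions X Y u)"
proof -
  have w: "y0 \<in> Y" "y0 \<notin> line u" "x0 \<in> X" "x0 \<notin> line u" "x0 \<notin> line y0"
    using w unfolding off_line_pairs_def by auto
  have nz: "y0 \<noteq> 0" "x0 \<noteq> 0" using w X Y by auto
  obtain l \<mu> where lm: "l \<in> E" "\<mu> \<in> E" "u = \<mu> * y0 + l * x0"
    using spanning_pair[OF nz(1) w(5)] by blast
  have l0: "l \<noteq> 0" using lm w(2) line_sym[OF nz(1) u] mem_line_iff by auto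
  have \<mu>0: "\<mu> \<noteq> 0" using lm w(4) line_sym[OF nz(2) u] mem_line_iff by auto
  define y where "y = \<mu> * y0"
  have "u - y = l * x0" using lm unfolding y_def by simp
  hence "y \<in> off_line_solutions X Y u"
    using w lm l0 \<mu>0 X Y scaling_closed_mem_iff[OF scaling_closed_line lm(2) \<mu>0]
    unfolding y_def off_line_solutions_def scaling_closed_def by auto
  hence "((inverse l, inverse \<mu>), y) \<in> ((E - {0}) \<times> (E - {0})) \<times> off_line_solutions X Y u"
    using lm l0 \<mu>0 inverse_mem by auto
  moreover have "scale_pair u ((inverse l, inverse \<mu>), y) = (y0, x0)"
    unfolding scale_pair_def using \<open>u - y = l * x0\<close> l0 \<mu>0 y_def by simp
  ultimately show ?thesis by force
qed

lemma card_off_line_pairs_eq: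
  assumes X: "scaling_closed X" "0 \<notin> X" and Y: "scaling_closed Y" "0 \<notin> Y" and u: "u \<noteq> 0"
  shows "card (off_line_pairs X Y u) = (card E - 1) * (card E - 1) * card (off_line_solutions X Y u)"
proof -
  define D where "D = ((E - {0}) \<times> (E - {0})) \<times> off_line_solutions X Y u"
  have "scale_pair u ` D = off_line_pairs X Y u"
    using scale_pair_mem_off_line_pairs[OF X(1) Y u] off_line_pair_in_image_scale_pair[OF X Y u]
    unfolding D_def by fastforce
  hence "card (off_line_pairs X Y u) = card D"
    using inj_on_scale_pair[OF Y(2) u] card_image unfolding D_def by metis
  thus ?thesis using zero_mem unfolding D_def by (simp add: card_cartesian_product card_Diff_singleton)
qed

lemma conv_count_eq:
  assumes X: "scaling_closed X" "0 \<notin> X" and Y: "scaling_closed Y" "0 \<notin> Y"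
    and uv: "u \<noteq> 0" "v \<noteq> 0" "u \<in> X \<longleftrightarrow> v \<in> X" "u \<in> Y \<longleftrightarrow> v \<in> Y"
  shows "conv_count X Y u = conv_count X Y v"
proof -
  have split: "conv_count X Y w = card {y \<in> Y. w - y \<in> X \<and> y \<in> line w} + card (off_line_solutions X Y w)" for w
  proof -
    have "{y \<in> Y. w - y \<in> X} = {y \<in> Y. w - y \<in> X \<and> y \<in> line w} \<union> off_line_solutions X Y w"
      unfolding off_line_solutions_def by auto
    thus ?thesis unfolding conv_count_def off_line_solutions_def by (simp add: card_Un_disjoint disjoint_iff)
  qed
  have XY: "scaling_closed (X \<inter> Y)" "0 \<notin> X \<inter> Y" using scaling_closed_Int[OF X(1) Y(1)] X by auto
  have "card (S - line u) = card (S - line v)" if "scaling_closed S" "0 \<notin> S" "u \<in> S \<longleftrightarrow> v \<in> S" for S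
    using card_Diff_line[OF that(1,2) uv(1)] card_Diff_line[OF that(1,2) uv(2)] that(3) by simp
  from this[OF X] this[OF Y] this[OF XY] have "card (off_line_pairs X Y u) = card (off_line_pairs X Y v)"
    using card_off_line_pairs[OF X Y, of u] card_off_line_pairs[OF X Y, of v] uv by simp
  moreover have "card E - 1 > 0" using card_ge_2 by simp
  ultimately have "card (off_line_solutions X Y u) = card (off_line_solutions X Y v)"
    using card_off_line_pairs_eq[OF X Y uv(1)] card_off_line_pairs_eq[OF X Y uv(2)] by simp
  thus ?thesis
    using split card_solutions_on_line[OF X Y uv(1)] card_solutions_on_line[OF X Y uv(2)] uv by simp
qed

context
  fixes f :: "'a \<Rightarrow> 'b"
  assumes scaling_invariant: "\<And>c x. c \<in> E \<Longrightarrow> c \<noteq> 0 \<Longrightarrow> f (c * x) = f x"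
begin

lemma scaling_closed_diff_class:
  "scaling_closed (diff_class f (Some i))" "0 \<notin> diff_class f (Some i)"
  unfolding diff_class_Some scaling_closed_def using scaling_invariant by auto

lemma conv_count_diff_class_eq:
  assumes uv: "u \<in> diff_class f c" "v \<in> diff_class f c"
  shows "conv_count (diff_class f a) (diff_class f b) u = conv_count (diff_class f a) (diff_class f b) v"
proof (cases c)
  case None
  thus ?thesis using uv by (simp add: diff_class_None)
next
  case (Some i)
  hence same: "u \<in> diff_class f x \<longleftrightarrow> v \<in> diff_class f x" for x
    using uv by (cases x) (auto simp: diff_class_None diff_class_Some)
  have nz: "u \<noteq> 0" "v \<noteq> 0" using uv Some by (auto simp: diff_class_Some)
  show ?thesis
  proof (cases "a = None \<or> b = None")
    case True
    thus ?thesis by (auto simp: diff_class_None conv_count_singleton_zero same)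
  next
    case False
    then obtain ia ib where "a = Some ia" "b = Some ib" by auto
    thus ?thesis using conv_count_eq[OF scaling_closed_diff_class scaling_closed_diff_class nz same same]
      by simp
  qed
qed

theorem induces_assoc_scheme_iff_if_scaling_invariant:
  "induces_assoc_scheme f d \<longleftrightarrow> d = card (f ` (UNIV - {0}))"
proof -
  have "sym (scheme_rel f a)" for a
  proof (rule symI)
    fix x y assume "(x, y) \<in> scheme_rel f a"
    moreover have "f (y - x) = f (x - y)"
      using scaling_invariant[of "-1" "x - y"] uminus_mem[OF one_mem] by simp
    ultimately show "(y, x) \<in> scheme_rel f a" by (cases a) (auto simp: scheme_rel_def)
  qed
  moreover have "\<exists>n. \<forall>u v. (u, v) \<in> scheme_rel f c \<longrightarrow>
      card {w. (u, w) \<in> scheme_rel f a \<and> (w, v) \<in> scheme_rel f b} = n" for a b c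
  proof (cases "diff_class f c = {}")
    case True
    thus ?thesis by (simp add: scheme_rel_iff)
  next
    case False
    then obtain d where d: "d \<in> diff_class f c" by blast
    show ?thesis
    proof (intro exI allI impI)
      fix u v assume "(u, v) \<in> scheme_rel f c"
      hence "u - v \<in> diff_class f c" by (simp only: scheme_rel_iff)
      from conv_count_diff_class_eq[OF this d]
      show "card {w. (u, w) \<in> scheme_rel f a \<and> (w, v) \<in> scheme_rel f b}
          = conv_count (diff_class f a) (diff_class f b) d"
        by (simp only: card_scheme_paths)
    qed
  qed
  ultimately show ?thesis unfolding induces_assoc_scheme_def by auto
qed

end

end

lemma ge_2_if_card_eq_square:
  assumes "card (UNIV :: 'a::{finite,field} set) = Q * Q"
  shows "Q \<ge> 2"
proof -
  have "Q * Q \<ge> 2" using assms card_mono[of UNIV "{0, 1 :: 'a}"] by simp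
  thus ?thesis using mult_le_mono[of Q 1 Q 1] by (cases "Q \<le> 1") auto
qed

lemma card_fixed_points_le:
  assumes "Q \<ge> 2"
  shows "card {x::'a::field. x ^ Q = x} \<le> Q"
proof -
  define T where "T = {x::'a. x ^ (Q - 1) = 1}"
  have "{x::'a. x ^ Q = x} \<subseteq> insert 0 T"
  proof
    fix x :: 'a assume x: "x \<in> {x. x ^ Q = x}"
    have "x * x ^ (Q - 1) = x ^ Q" using assms by (simp flip: power_Suc)
    hence "x * x ^ (Q - 1) = x * 1" using x by simp
    thus "x \<in> insert 0 T" unfolding T_def by auto
  qed
  moreover have fin: "finite T" and le: "card T \<le> Q - 1"
    unfolding T_def using finite_power_eq[of "Q - 1" "1::'a"] card_power_eq_le[of "Q - 1" "1::'a"] assms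
    by simp_all
  ultimately have "card {x::'a. x ^ Q = x} \<le> card (insert 0 T)" by (intro card_mono) simp_all
  also have "\<dots> \<le> Suc (card T)" using fin by (simp add: card_insert_if)
  finally show ?thesis using le assms by simp
qed

text \<open>The norm \<open>x \<mapsto> x\<^sup>Q\<^sup>+\<^sup>1\<close> maps \<open>\<bbbF>\<^sub>q\<^sup>*\<close> into the fixed points of \<open>x \<mapsto> x\<^sup>Q\<close>,
  with fibres of size at most \<open>Q + 1\<close>.\<close>
lemma card_fixed_points_ge:
  assumes card: "card (UNIV :: 'a::{finite,field} set) = Q * Q"
  shows "Q \<le> card {x::'a. x ^ Q = x}"
proof -
  define E where "E = {x::'a. x ^ Q = x}"
  have Q2: "Q \<ge> 2" by (rule ge_2_if_card_eq_square[OF card])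
  have "(\<lambda>x::'a. x ^ (Q + 1)) ` (UNIV - {0}) \<subseteq> E - {0}"
  proof (rule image_subsetI)
    fix x :: 'a assume "x \<in> UNIV - {0}"
    have "(x ^ (Q + 1)) ^ Q = x ^ (Q * Q) * x ^ Q" by (simp add: power_mult[symmetric] algebra_simps power_add)
    also have "x ^ (Q * Q) = x" using finite_field_power_card[of x] card by simp
    finally show "x ^ (Q + 1) \<in> E - {0}" using \<open>x \<in> UNIV - {0}\<close> unfolding E_def by (simp add: mult.commute)
  qed
  moreover have "0 \<in> E" unfolding E_def using Q2 by simp
  ultimately have image_le: "card ((\<lambda>x::'a. x ^ (Q + 1)) ` (UNIV - {0})) \<le> card E - 1"
    using card_mono[of "E - {0}"] by (simp add: card_Diff_singleton)
  have "(Q - 1) * (Q + 1) = Q * Q - 1" using Q2 by (cases Q) (auto simp: algebra_simps)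
  also have "\<dots> \<le> card ((\<lambda>x::'a. x ^ (Q + 1)) ` (UNIV - {0})) * (Q + 1)"
    using card_nonzero_le_card_image_power[of "Q + 1", where 'a='a] card by simp
  also have "\<dots> \<le> (card E - 1) * (Q + 1)" using image_le by (rule mult_le_mono1)
  finally have "Q - 1 \<le> card E - 1" by (subst (asm) mult_le_cancel2) simp
  thus ?thesis using Q2 unfolding E_def by simp
qed

lemma quadratic_subfield_fixed_points:
  assumes card: "card (UNIV :: 'a::{finite,field} set) = Q * Q" and Q: "Q = CHAR('a) ^ j"
  shows "quadratic_subfield {x::'a. x ^ Q = x}"
proof
  have Q2: "Q \<ge> 2" by (rule ge_2_if_card_eq_square[OF card])
  show "(0::'a) \<in> {x. x ^ Q = x}" "(1::'a) \<in> {x. x ^ Q = x}" using Q2 by auto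
  show "a + b \<in> {x. x ^ Q = x}" if "a \<in> {x. x ^ Q = x}" "b \<in> {x. x ^ Q = x}" for a b :: 'a
    using that frobenius_power_add[OF Q] by simp
  show "- a \<in> {x. x ^ Q = x}" if "a \<in> {x. x ^ Q = x}" for a :: 'a
    using that frobenius_power_uminus[OF Q] by simp
  show "a * b \<in> {x. x ^ Q = x}" if "a \<in> {x. x ^ Q = x}" "b \<in> {x. x ^ Q = x}" for a b :: 'a
    using that by (simp add: power_mult_distrib)
  show "inverse a \<in> {x. x ^ Q = x}" if "a \<in> {x. x ^ Q = x}" for a :: 'a
    using that by (simp add: power_inverse)
  show "card {x::'a. x ^ Q = x} * card {x::'a. x ^ Q = x} = card (UNIV :: 'a set)"
    using card_fixed_points_le[OF Q2, where 'a='a] card_fixed_points_ge[OF card] card by simp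
qed

section \<open>Quadratic residues, Gauss sums and Gaussian periods\<close>

locale odd_prime =
  fixes r :: nat
  assumes prime: "prime r" and gt_2: "r > 2"
begin

definition chi :: "nat \<Rightarrow> int" where
  "chi a = Legendre (int a) (int r)"

definition U :: "nat set" where
  "U = {1..<r}"

definition QR :: "nat set" where
  "QR = {a \<in> U. chi a = 1}"

definition NQR :: "nat set" where
  "NQR = {a \<in> U. chi a = -1}"

lemma finite_sets [simp]: "finite U" "finite QR" "finite NQR"
  unfolding U_def QR_def NQR_def by auto

lemma card_U: "card U = r - 1"
  unfolding U_def by simp

lemma chi_cases: "chi a = -1 \<or> chi a = 0 \<or> chi a = 1"
  unfolding chi_def Legendre_def by auto

lemma chi_eq_0_iff: "chi a = 0 \<longleftrightarrow> r dvd a"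
  unfolding chi_def Legendre_def by (auto simp: cong_0_iff)

lemma mem_U_iff: "a \<in> U \<longleftrightarrow> a < r \<and> \<not> r dvd a"
  unfolding U_def by (cases "a = 0") (auto dest: dvd_imp_le)

lemma mod_mem_U: "\<not> r dvd a \<Longrightarrow> a mod r \<in> U"
  using gt_2 by (simp add: mem_U_iff dvd_mod_iff)

lemma U_eq_QR_Un_NQR: "U = QR \<union> NQR" and QR_NQR_disjoint: "QR \<inter> NQR = {}"
proof -
  have "chi a \<noteq> 0" if "a \<in> U" for a using that chi_eq_0_iff mem_U_iff by auto
  thus "U = QR \<union> NQR" "QR \<inter> NQR = {}" unfolding QR_def NQR_def using chi_cases by auto
qed

lemma chi_eqI:
  assumes "[x = chi a] (mod int r)" "x = -1 \<or> x = 0 \<or> x = 1"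
  shows "chi a = x"
proof (rule ccontr)
  assume "chi a \<noteq> x"
  moreover have "int r dvd x - chi a" using assms(1) by (simp add: cong_iff_dvd_diff)
  ultimately have "\<bar>int r\<bar> \<le> \<bar>x - chi a\<bar>" by (intro dvd_imp_le_int) simp_all
  moreover have "\<bar>x - chi a\<bar> \<le> 2" using assms(2) chi_cases[of a] by auto
  ultimately show False using gt_2 by simp
qed

lemma chi_euler: "[chi a = int a ^ ((r - 1) div 2)] (mod int r)"
  unfolding chi_def using euler_criterion[OF prime gt_2] .

lemma chi_mult: "chi (a * b) = chi a * chi b"
proof (rule chi_eqI)
  have "[chi a * chi b = int a ^ ((r - 1) div 2) * int b ^ ((r - 1) div 2)] (mod int r)"
    by (rule cong_mult[OF chi_euler chi_euler])
  also have "int a ^ ((r - 1) div 2) * int b ^ ((r - 1) div 2) = int (a * b) ^ ((r - 1) div 2)"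
    by (simp add: power_mult_distrib)
  also have "[\<dots> = chi (a * b)] (mod int r)" by (rule cong_sym[OF chi_euler])
  finally show "[chi a * chi b = chi (a * b)] (mod int r)" .
  show "chi a * chi b = -1 \<or> chi a * chi b = 0 \<or> chi a * chi b = 1"
    using chi_cases[of a] chi_cases[of b] by auto
qed

lemma chi_mod: "chi (a mod r) = chi a"
proof (rule chi_eqI[OF _ chi_cases])
  have "[int (a mod r) ^ ((r - 1) div 2) = int a ^ ((r - 1) div 2)] (mod int r)"
    by (intro cong_pow) (simp add: cong_def zmod_int)
  thus "[chi a = chi (a mod r)] (mod int r)"
    using chi_euler[of a] chi_euler[of "a mod r"] cong_sym cong_trans by metis
qed

lemma power_cong_one_if_chi_one:
  assumes "chi a = 1"
  shows "[a ^ ((r - 1) div 2) = 1] (mod r)"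
proof -
  have "[int (a ^ ((r - 1) div 2)) = int 1] (mod int r)"
    using cong_sym[OF chi_euler[of a]] assms by simp
  thus ?thesis by (simp only: cong_int_iff)
qed

lemma nonresidue_exists: "\<exists>b. b \<in> NQR"
proof -
  obtain g where g: "residue_primroot r g"
    using prime_primitive_root_exists[of r] prime gt_2 by auto
  hence ord: "ord r g = r - 1" and "coprime r g"
    using prime by (auto simp: residue_primroot_def totient_prime)
  hence "\<not> r dvd g" using prime by (metis coprime_absorb_left not_prime_unit)
  moreover have "chi g \<noteq> 1"
  proof
    assume "chi g = 1"
    hence "r - 1 dvd (r - 1) div 2"
      using power_cong_one_if_chi_one[of g] ord ord_divides by metis
    thus False using gt_2 by (auto dest: dvd_imp_le)
  qed
  ultimately have "g mod r \<in> NQR"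
    using chi_cases[of g] chi_eq_0_iff[of g] mod_mem_U chi_mod[of g] unfolding NQR_def by auto
  thus ?thesis by blast
qed

lemma bij_betw_mult_mod:
  assumes "a \<in> U"
  shows "bij_betw (\<lambda>x. a * x mod r) U U"
proof -
  have "coprime r a" using assms prime by (simp add: mem_U_iff prime_imp_coprime)
  hence "coprime a r" by (simp add: coprime_commute)
  hence inj: "inj_on (\<lambda>x. a * x mod r) U"
    by (auto intro!: inj_onI simp: mem_U_iff cong_less_modulus_unique_nat cong_mult_lcancel_nat
        simp flip: cong_def)
  moreover have "(\<lambda>x. a * x mod r) ` U \<subseteq> U"
    using assms prime by (auto simp: mem_U_iff prime_dvd_mult_iff dvd_mod_iff)
  ultimately show ?thesis
    by (simp add: bij_betw_def card_image card_subset_eq)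
qed

lemma chi_mult_mod: "chi (a * x mod r) = chi a * chi x"
  by (simp add: chi_mod chi_mult)

lemma card_mult_mod_image:
  assumes "a \<in> U" "A \<subseteq> U"
  shows "card ((\<lambda>x. a * x mod r) ` A) = card A"
  using bij_betw_imp_inj_on[OF bij_betw_mult_mod[OF assms(1)]] assms(2)
  by (intro card_image) (rule inj_on_subset)

lemma mult_mod_image_subset:
  assumes "a \<in> U"
  shows "(\<lambda>x. a * x mod r) ` QR \<subseteq> (if chi a = 1 then QR else NQR)"
    and "(\<lambda>x. a * x mod r) ` NQR \<subseteq> (if chi a = 1 then NQR else QR)"
proof -
  have "chi a = 1 \<or> chi a = -1" "a * x mod r \<in> U" if "x \<in> U" for x
    using assms that chi_cases[of a] chi_eq_0_iff[of a] bij_betw_mult_mod[OF assms]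
    by (auto simp: mem_U_iff bij_betw_def)
  thus "(\<lambda>x. a * x mod r) ` QR \<subseteq> (if chi a = 1 then QR else NQR)"
    "(\<lambda>x. a * x mod r) ` NQR \<subseteq> (if chi a = 1 then NQR else QR)"
    using assms by (auto simp: QR_def NQR_def chi_mult_mod)
qed

lemma card_QR: "card QR = (r - 1) div 2" and card_NQR: "card NQR = (r - 1) div 2"
proof -
  obtain b where "b \<in> NQR" using nonresidue_exists by blast
  hence b: "b \<in> U" "chi b \<noteq> 1" by (auto simp: NQR_def)
  have "card QR = card ((\<lambda>x. b * x mod r) ` QR)"
    using card_mult_mod_image[OF b(1), of QR] by (simp add: QR_def)
  also have "\<dots> \<le> card NQR"
    using mult_mod_image_subset(1)[OF b(1)] b(2) by (intro card_mono) auto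
  finally have "card QR \<le> card NQR" .
  have "card NQR = card ((\<lambda>x. b * x mod r) ` NQR)"
    using card_mult_mod_image[OF b(1), of NQR] by (simp add: NQR_def)
  also have "\<dots> \<le> card QR"
    using mult_mod_image_subset(2)[OF b(1)] b(2) by (intro card_mono) auto
  finally have "card NQR \<le> card QR" .
  moreover have "card QR + card NQR = r - 1"
    using card_Un_disjoint[of QR NQR] U_eq_QR_Un_NQR QR_NQR_disjoint card_U by simp
  ultimately show "card QR = (r - 1) div 2" "card NQR = (r - 1) div 2"
    using \<open>card QR \<le> card NQR\<close> by simp_all
qed

lemma mult_mod_image_QR:
  assumes "a \<in> U"
  shows "(\<lambda>x. a * x mod r) ` QR = (if chi a = 1 then QR else NQR)"
  using mult_mod_image_subset(1)[OF assms] card_mult_mod_image[OF assms, of QR] card_QR card_NQR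
  by (intro card_subset_eq) (auto simp: QR_def)

lemma sum_chi: "(\<Sum>a\<in>U. chi a) = 0"
proof -
  have "(\<Sum>a\<in>U. chi a) = (\<Sum>a\<in>QR. chi a) + (\<Sum>a\<in>NQR. chi a)"
    unfolding U_eq_QR_Un_NQR by (rule sum.union_disjoint) (use QR_NQR_disjoint in auto)
  also have "\<dots> = int (card QR) - int (card NQR)"
    by (simp add: QR_def NQR_def sum_negf)
  finally show ?thesis using card_QR card_NQR by simp
qed

end

context odd_prime
begin

lemma chi_eq_one_if_power_cong:
  assumes "[a ^ ((r - 1) div 2) = 1] (mod r)"
  shows "chi a = 1"
proof (rule chi_eqI)
  have "[chi a = int a ^ ((r - 1) div 2)] (mod int r)" by (rule chi_euler)
  also have "[int a ^ ((r - 1) div 2) = 1] (mod int r)"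
    using assms by (metis cong_int_iff of_nat_1 of_nat_power)
  finally show "[1 = chi a] (mod int r)" by (rule cong_sym)
qed simp

lemma chi_minus_one:
  assumes "4 dvd r - 1"
  shows "chi (r - 1) = 1"
proof (rule chi_eqI)
  have "[chi (r - 1) = int (r - 1) ^ ((r - 1) div 2)] (mod int r)" by (rule chi_euler)
  also have "[int (r - 1) = -1] (mod int r)" using gt_2 by (simp add: cong_iff_dvd_diff)
  hence "[int (r - 1) ^ ((r - 1) div 2) = (-1) ^ ((r - 1) div 2)] (mod int r)" by (rule cong_pow)
  also have "even ((r - 1) div 2)" using assms by (auto simp: dvd_def)
  hence "(-1 :: int) ^ ((r - 1) div 2) = 1" by simp
  finally show "[1 = chi (r - 1)] (mod int r)" by (rule cong_sym)
qed simp

lemma QR_eq_powers: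
  assumes "ord r b = (r - 1) div 2"
  shows "(\<lambda>i. b ^ i mod r) ` {..<(r - 1) div 2} = QR"
proof -
  have "coprime r b" using assms gt_2 ord_gt_0_iff[of r b] by simp
  hence inj: "inj_on (\<lambda>i. b ^ i mod r) {..<(r - 1) div 2}"
    using inj_power_mod[of r b] assms by simp
  have "b ^ i mod r \<in> QR" for i
  proof -
    have "\<not> r dvd b ^ i"
    proof
      assume "r dvd b ^ i"
      moreover have "coprime r (b ^ i)" using \<open>coprime r b\<close> by simp
      ultimately have "is_unit r" using coprime_absorb_left by blast
      thus False using prime by simp
    qed
    moreover have "[(b ^ ((r - 1) div 2)) ^ i = 1 ^ i] (mod r)"
      using ord[of b r] assms by (intro cong_pow) simp
    moreover have "(b ^ i) ^ ((r - 1) div 2) = (b ^ ((r - 1) div 2)) ^ i"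
      by (simp only: power_mult[symmetric] mult.commute)
    ultimately show ?thesis
      using chi_eq_one_if_power_cong[of "b ^ i"] mod_mem_U chi_mod by (simp add: QR_def)
  qed
  hence "(\<lambda>i. b ^ i mod r) ` {..<(r - 1) div 2} \<subseteq> QR" by auto
  moreover have "card ((\<lambda>i. b ^ i mod r) ` {..<(r - 1) div 2}) = card QR"
    using inj card_QR by (simp add: card_image)
  ultimately show ?thesis by (intro card_subset_eq) auto
qed

definition gauss_sum :: "'a::field \<Rightarrow> 'a" where
  "gauss_sum z = (\<Sum>a\<in>U. of_int (chi a) * z ^ a)"

definition period :: "'a::field \<Rightarrow> 'a" where
  "period z = (\<Sum>a\<in>QR. z ^ a)"

lemma sum_U_power:
  fixes z :: "'a::field"
  assumes "z ^ r = 1" "z \<noteq> 1"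
  shows "(\<Sum>a\<in>U. z ^ (a * c)) = (if r dvd c then of_nat r - 1 else -1)"
proof -
  have "{..<r} = insert 0 U" "0 \<notin> U" using gt_2 unfolding U_def by auto
  hence "(\<Sum>a<r. (z ^ c) ^ a) = 1 + (\<Sum>a\<in>U. z ^ (a * c))"
    by (simp add: power_mult[symmetric] mult.commute)
  moreover have "(\<Sum>a<r. (z ^ c) ^ a) = (if r dvd c then of_nat r else 0)"
  proof (cases "r dvd c")
    case True
    hence "z ^ c = 1" using power_eq_one_iff_prime_dvd[OF prime assms] by simp
    thus ?thesis using True by simp
  next
    case False
    hence "z ^ c \<noteq> 1" using power_eq_one_iff_prime_dvd[OF prime assms] by simp
    moreover have "(z ^ c) ^ r = 1" using assms(1) by (metis power_mult mult.commute power_one)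
    ultimately show ?thesis using False by (simp add: sum_gp_strict)
  qed
  ultimately have "1 + (\<Sum>a\<in>U. z ^ (a * c)) = (if r dvd c then of_nat r else 0)" by simp
  thus ?thesis by (cases "r dvd c") (simp_all add: eq_diff_eq add.commute eq_neg_iff_add_eq_0)
qed

lemma chi_square: "a \<in> U \<Longrightarrow> chi a * chi a = 1"
  using chi_cases[of a] chi_eq_0_iff[of a] mem_U_iff[of a] by auto

text \<open>The substitution \<open>c = a y\<close> in the double sum defining the square of a Gauss sum.\<close>
lemma sum_chi_power_substitution:
  fixes z :: "'a::field"
  assumes z: "z ^ r = 1" and a: "a \<in> U"
  shows "(\<Sum>c\<in>U. of_int (chi a * chi c) * z ^ (a + c)) = (\<Sum>y\<in>U. of_int (chi y) * z ^ (a * (1 + y)))"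
proof -
  have "(\<Sum>c\<in>U. of_int (chi a * chi c) * z ^ (a + c))
      = (\<Sum>y\<in>U. of_int (chi a * chi (a * y mod r)) * z ^ (a + a * y mod r))"
    by (rule sum.reindex_bij_betw[OF bij_betw_mult_mod[OF a], symmetric])
  also have "\<dots> = (\<Sum>y\<in>U. of_int (chi y) * z ^ (a * (1 + y)))"
  proof (rule sum.cong[OF refl])
    fix y
    have "chi a * chi (a * y mod r) = chi y"
      using chi_square[OF a] by (simp add: chi_mult_mod flip: mult.assoc)
    moreover have "z ^ (a + a * y mod r) = z ^ ((a + a * y mod r) mod r)"
      by (rule power_mod_if_power_eq_one[OF z])
    moreover have "(a + a * y mod r) mod r = (a * (1 + y)) mod r"
      by (simp add: mod_add_right_eq algebra_simps)
    ultimately show "of_int (chi a * chi (a * y mod r)) * z ^ (a + a * y mod r)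
        = of_int (chi y) * z ^ (a * (1 + y))"
      using power_mod_if_power_eq_one[OF z, of "a * (1 + y)"] by simp
  qed
  finally show ?thesis .
qed

lemma gauss_sum_square:
  fixes z :: "'a::field"
  assumes z: "z ^ r = 1" "z \<noteq> 1"
  shows "gauss_sum z * gauss_sum z = of_int (chi (r - 1)) * of_nat r"
proof -
  have last: "r dvd 1 + y \<longleftrightarrow> y = r - 1" if "y \<in> U" for y
  proof
    assume "r dvd 1 + y"
    hence "r \<le> 1 + y" by (rule dvd_imp_le) simp
    moreover have "y < r" using that by (simp add: U_def)
    ultimately show "y = r - 1" by linarith
  qed (use gt_2 in simp)
  have "gauss_sum z * gauss_sum z = (\<Sum>a\<in>U. \<Sum>c\<in>U. of_int (chi a * chi c) * z ^ (a + c))"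
    unfolding gauss_sum_def sum_product by (simp add: power_add mult_ac)
  also have "\<dots> = (\<Sum>a\<in>U. \<Sum>y\<in>U. of_int (chi y) * z ^ (a * (1 + y)))"
    by (rule sum.cong[OF refl sum_chi_power_substitution[OF z(1)]])
  also have "\<dots> = (\<Sum>y\<in>U. of_int (chi y) * (\<Sum>a\<in>U. z ^ (a * (1 + y))))"
    by (subst sum.swap) (simp add: sum_distrib_left)
  also have "\<dots> = (\<Sum>y\<in>U. (if y = r - 1 then of_int (chi y) * of_nat r else 0) - of_int (chi y))"
  proof (rule sum.cong[OF refl])
    fix y assume "y \<in> U"
    hence "(\<Sum>a\<in>U. z ^ (a * (1 + y))) = (if y = r - 1 then of_nat r - 1 else -1)"
      using sum_U_power[OF z, of "1 + y"] last by simp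
    thus "of_int (chi y) * (\<Sum>a\<in>U. z ^ (a * (1 + y)))
        = (if y = r - 1 then of_int (chi y) * of_nat r else 0) - of_int (chi y)"
      by (simp add: algebra_simps)
  qed
  also have "\<dots> = of_int (chi (r - 1)) * of_nat r - of_int (\<Sum>y\<in>U. chi y)"
    using gt_2 by (simp add: sum_subtractf U_def)
  finally show ?thesis by (simp add: sum_chi)
qed

lemma period_power:
  fixes z :: "'a::field"
  assumes z: "z ^ r = 1" and a: "a \<in> U"
  shows "period (z ^ a) = (if chi a = 1 then period z else (\<Sum>x\<in>NQR. z ^ x))"
proof -
  have "period (z ^ a) = (\<Sum>x\<in>QR. z ^ (a * x mod r))"
    unfolding period_def using power_mod_if_power_eq_one[OF z] by (simp flip: power_mult)
  also have "\<dots> = (\<Sum>y\<in>(\<lambda>x. a * x mod r) ` QR. z ^ y)"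
  proof -
    have "inj_on (\<lambda>x. a * x mod r) QR"
      using card_mult_mod_image[OF a, of QR] by (intro eq_card_imp_inj_on) (auto simp: QR_def)
    thus ?thesis by (simp add: sum.reindex)
  qed
  finally show ?thesis using mult_mod_image_QR[OF a] by (simp add: period_def)
qed

lemma period_add_period_nonresidue:
  fixes z :: "'a::field"
  assumes z: "z ^ r = 1" "z \<noteq> 1" and b: "b \<in> NQR"
  shows "period z + period (z ^ b) = -1"
proof -
  have "(\<Sum>a\<in>U. z ^ a) = -1" using sum_U_power[OF z, of 1] gt_2 by simp
  moreover have "(\<Sum>a\<in>U. z ^ a) = period z + (\<Sum>x\<in>NQR. z ^ x)"
    unfolding U_eq_QR_Un_NQR period_def by (rule sum.union_disjoint) (auto simp: QR_NQR_disjoint)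
  ultimately show ?thesis using period_power[OF z(1), of b] b by (simp add: NQR_def)
qed

lemma period_quadratic:
  fixes z :: "'a::field"
  assumes z: "z ^ r = 1" "z \<noteq> 1"
  shows "(2 * period z + 1) * (2 * period z + 1) = of_int (chi (r - 1)) * of_nat r"
proof -
  obtain b where b: "b \<in> NQR" using nonresidue_exists by blast
  have "gauss_sum z = (\<Sum>a\<in>QR. of_int (chi a) * z ^ a) + (\<Sum>a\<in>NQR. of_int (chi a) * z ^ a)"
    unfolding gauss_sum_def U_eq_QR_Un_NQR by (rule sum.union_disjoint) (auto simp: QR_NQR_disjoint)
  also have "\<dots> = period z - period (z ^ b)"
    using period_power[OF z(1), of b] b by (simp add: QR_def NQR_def period_def sum_negf)
  also have "\<dots> = 2 * period z + 1"
    using period_add_period_nonresidue[OF z b] by (simp add: algebra_simps eq_neg_iff_add_eq_0)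
  finally show ?thesis using gauss_sum_square[OF z] by simp
qed

end

section \<open>The absolute trace\<close>

context
  fixes p k :: nat
  assumes prime_p: "prime p" and card_UNIV: "card (UNIV :: 'a::{finite,field} set) = p ^ k"
begin

lemma degree_pos: "k > 0"
  using card_UNIV card_mono[of UNIV "{0, 1 :: 'a}"] by (cases k) auto

lemma power_p_power_sum: "(sum g A :: 'a) ^ p ^ j = (\<Sum>i\<in>A. g i ^ p ^ j)"
proof -
  have "p ^ j = CHAR('a) ^ j" by (simp add: finite_field_CHAR_eq[OF prime_p card_UNIV])
  from freshmans_dream_sum'[OF finite_field_prime_CHAR this] show ?thesis .
qed

lemma trace_Fp_sum: "trace_Fp p k (sum g A :: 'a) = (\<Sum>i\<in>A. trace_Fp p k (g i))"
  unfolding trace_Fp_def power_p_power_sum by (rule sum.swap)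

lemma trace_Fp_zero: "trace_Fp p k (0 :: 'a) = 0"
  using prime_gt_0_nat[OF prime_p] by (simp add: trace_Fp_def zero_power)

lemma trace_Fp_one: "trace_Fp p k (1 :: 'a) = of_nat k"
  by (simp add: trace_Fp_def)

lemma trace_Fp_power_p: "trace_Fp p k ((y :: 'a) ^ p) = trace_Fp p k y"
proof -
  obtain k' where k: "k = Suc k'" using degree_pos by (cases k) auto
  have "y ^ p ^ k = y" using finite_field_power_card[of y] card_UNIV by simp
  hence "trace_Fp p k (y ^ p) = (\<Sum>j<k'. y ^ p ^ Suc j) + y"
    unfolding trace_Fp_def k by (simp add: power_mult[symmetric] mult.commute)
  also have "\<dots> = trace_Fp p k y"
    unfolding trace_Fp_def k by (simp only: sum.lessThan_Suc_shift) simp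
  finally show ?thesis .
qed

lemma trace_Fp_power_p_power: "trace_Fp p k ((y :: 'a) ^ p ^ d) = trace_Fp p k y"
proof (induction d)
  case (Suc d)
  have "y ^ p ^ Suc d = (y ^ p ^ d) ^ p" by (simp add: power_mult[symmetric] mult.commute)
  thus ?case using trace_Fp_power_p Suc by simp
qed simp

lemma trace_Fp_power_p_eq: "(trace_Fp p k (y :: 'a)) ^ p = trace_Fp p k y"
proof -
  have "(trace_Fp p k y) ^ p = (\<Sum>j<k. (y ^ p ^ j) ^ p)"
    unfolding trace_Fp_def using power_p_power_sum[of "\<lambda>j. y ^ p ^ j" "{..<k}" 1] by simp
  also have "\<dots> = trace_Fp p k (y ^ p)"
    unfolding trace_Fp_def by (simp add: power_mult[symmetric] mult.commute)
  finally have "(trace_Fp p k y) ^ p = trace_Fp p k (y ^ p)" .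
  thus ?thesis using trace_Fp_power_p by simp
qed

text \<open>If a power of Frobenius multiplies \<open>z\<close> by a root of unity \<open>w \<noteq> 1\<close> fixed by it,
  then \<open>n \<cdot> Tr z = Tr (z (1 + w + \<dots> + w\<^sup>n\<^sup>-\<^sup>1)) = 0\<close>.\<close>
lemma trace_Fp_eq_0_if_twisted:
  fixes z w :: 'a
  assumes "w ^ n = 1" "w \<noteq> 1" "of_nat n \<noteq> (0 :: 'a)"
    and "z ^ p ^ d = w * z" "w ^ p ^ d = w"
  shows "trace_Fp p k z = 0"
proof -
  have twist: "trace_Fp p k (z * w ^ s) = trace_Fp p k z" for s
  proof (induction s)
    case (Suc s)
    have "(w ^ s) ^ p ^ d = (w ^ p ^ d) ^ s" by (simp only: power_mult[symmetric] mult.commute)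
    hence "(z * w ^ s) ^ p ^ d = z * w ^ Suc s"
      using assms(4,5) by (simp add: power_mult_distrib)
    thus ?case using trace_Fp_power_p_power[of "z * w ^ s" d] Suc by simp
  qed simp
  have "of_nat n * trace_Fp p k z = (\<Sum>s<n. trace_Fp p k (z * w ^ s))"
    using twist by simp
  also have "\<dots> = trace_Fp p k (z * (\<Sum>s<n. w ^ s))"
    by (simp add: sum_distrib_left trace_Fp_sum)
  also have "\<dots> = 0" using assms(1,2) by (simp add: sum_gp_strict trace_Fp_zero)
  finally show ?thesis using assms(3) by simp
qed

end

section \<open>Traces of roots of unity of prime power order\<close>

locale index_two_trace =
  fixes m r p :: nat and f :: "'a::{finite,field} \<Rightarrow> 'a"
  assumes m_pos: "m > 0" and prime_r: "prime r" and r_mod_4: "r mod 4 = 1" and prime_p: "prime p"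
    and ord_p: "ord (r ^ m) p = totient (r ^ m) div 2"
    and card_UNIV: "card (UNIV :: 'a set) = p ^ (totient (r ^ m) div 2)"
    and f_def: "f = (\<lambda>x. trace_Fp p (totient (r ^ m) div 2) (x ^ ((card (UNIV :: 'a set) - 1) div r ^ m)))"
begin

definition e :: nat where "e = (r - 1) div 2"
definition k :: nat where "k = totient (r ^ m) div 2"
definition Q :: nat where "Q = p ^ (k div 2)"
definition t :: nat where "t = (p ^ k - 1) div r ^ m"

abbreviation Tr :: "'a \<Rightarrow> 'a" where "Tr \<equiv> trace_Fp p k"

lemma r_ge_5: "r \<ge> 5"
proof -
  have "r \<ge> 2" using prime_r prime_ge_2_nat by blast
  moreover have "r \<noteq> 2" "r \<noteq> 3" "r \<noteq> 4" using r_mod_4 by auto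
  ultimately show ?thesis using r_mod_4 by presburger
qed

lemma r_minus_1_eq: "r - 1 = 2 * e" and even_e: "even e" and e_ge_2: "e \<ge> 2"
  using r_mod_4 r_ge_5 unfolding e_def by presburger+

sublocale odd_prime r
  by unfold_locales (use prime_r r_ge_5 in auto)

lemma k_eq: "k = r ^ (m - 1) * e"
  unfolding k_def totient_prime_power[OF prime_r m_pos] r_minus_1_eq by simp

lemma k_pos: "k > 0" and even_k: "even k"
  using k_eq e_ge_2 even_e r_ge_5 by simp_all

lemma card_eq: "card (UNIV :: 'a set) = p ^ k"
  using card_UNIV k_def by simp

lemma cong_power_p_iff: "[p ^ d = 1] (mod r ^ m) \<longleftrightarrow> k dvd d"
  using ord_divides ord_p k_def by metis

lemma coprime_r_p: "coprime r p"
  using ord_p k_def k_pos ord_eq_0[of "r ^ m" p] m_pos by auto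

lemma not_r_dvd_p: "\<not> r dvd p"
  using coprime_r_p prime_r coprime_absorb_left not_prime_unit by blast

lemma not_p_dvd_r: "\<not> p dvd r"
  using not_r_dvd_p prime_r prime_p primes_dvd_imp_eq by blast

lemma k_dvd_if_cong:
  assumes "[p ^ d = 1] (mod r ^ j)" "0 < j" "j \<le> m"
  shows "k dvd d * r ^ (m - j)"
proof -
  have "[(p ^ d) ^ r ^ (m - j) = 1] (mod r ^ (j + (m - j)))"
    using cong_one_prime_power_lift[OF prime_r assms(2,1)] .
  hence "[p ^ (d * r ^ (m - j)) = 1] (mod r ^ m)" using assms(3) by (simp add: power_mult)
  thus ?thesis by (rule cong_power_p_iff[THEN iffD1])
qed

lemma ord_r_p: "ord r p = e"
proof -
  define o1 where "o1 = ord r p"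
  have "o1 dvd r - 1"
    using fermat_theorem[OF prime_r not_r_dvd_p] ord_divides o1_def by metis
  moreover have "coprime r (r - 1)"
    using r_ge_5 coprime_Suc_left_nat[of "r - 1"] by simp
  hence "coprime (r - 1) r" by (rule coprime_commute[THEN iffD1])
  ultimately have "coprime o1 (r ^ (m - 1))"
    using coprime_imp_coprime dvd_trans by (metis coprime_power_right_iff)
  moreover have "[p ^ k = 1] (mod r)"
    using cong_power_p_iff[of k] m_pos cong_dvd_modulus_nat[of _ _ "r ^ m" r] by simp
  hence "o1 dvd r ^ (m - 1) * e" using ord_divides o1_def k_eq by metis
  ultimately have "o1 dvd e" using coprime_dvd_mult_right_iff by blast
  moreover have "k dvd o1 * r ^ (m - 1)"
    using k_dvd_if_cong[of o1 1] ord[of p r] m_pos unfolding o1_def by simp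
  hence "r ^ (m - 1) * e dvd r ^ (m - 1) * o1" by (simp add: k_eq mult.commute)
  hence "e dvd o1" using r_ge_5 nat_mult_dvd_cancel1[of "r ^ (m - 1)"] by simp
  ultimately show ?thesis unfolding o1_def by (simp add: dvd_antisym)
qed

text \<open>The order of \<open>p\<close> modulo \<open>r\<^sup>j\<close> strictly grows with \<open>j \<le> m\<close>, since otherwise lifting
  would make \<open>k = r\<^sup>m\<^sup>-\<^sup>1 e\<close> divide \<open>\<phi>(r\<^sup>j\<^sup>-\<^sup>1) r\<^sup>m\<^sup>-\<^sup>j = 2 e r\<^sup>m\<^sup>-\<^sup>2\<close>.\<close>
lemma not_cong_ord_prime_power:
  assumes "2 \<le> j" "j \<le> m"
  shows "\<not> [p ^ ord (r ^ (j - 1)) p = 1] (mod r ^ j)"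
proof
  define d where "d = ord (r ^ (j - 1)) p"
  assume "[p ^ ord (r ^ (j - 1)) p = 1] (mod r ^ j)"
  hence "k dvd d * r ^ (m - j)" using k_dvd_if_cong assms unfolding d_def by simp
  moreover have "d > 0" using coprime_r_p by (simp add: d_def)
  ultimately have "r ^ (m - 1) * e \<le> d * r ^ (m - j)" using k_eq r_ge_5 by (simp add: dvd_imp_le)
  moreover have "coprime p (r ^ (j - 1))" using coprime_r_p by (simp add: coprime_commute)
  hence "d dvd totient (r ^ (j - 1))"
    using euler_theorem ord_divides d_def by metis
  hence "d \<le> r ^ (j - 2) * (2 * e)"
    using totient_prime_power[OF prime_r, of "j - 1"] assms r_minus_1_eq r_ge_5
    by (simp add: dvd_imp_le numeral_2_eq_2)
  ultimately have "r ^ (m - 1) * e \<le> r ^ (j - 2) * (2 * e) * r ^ (m - j)"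
    by (meson le_trans mult_le_mono1)
  also have "\<dots> = 2 * (r ^ (m - 2) * e)"
    using assms by (simp add: mult_ac flip: power_add)
  finally have "r ^ (m - 1) * e \<le> 2 * (r ^ (m - 2) * e)" .
  moreover have "m - 1 = Suc (m - 2)" using assms by simp
  ultimately have "r * (r ^ (m - 2) * e) \<le> 2 * (r ^ (m - 2) * e)"
    by (simp only: power_Suc mult.assoc)
  moreover have "r ^ (m - 2) * e > 0" using r_ge_5 e_ge_2 by simp
  ultimately have "r \<le> 2" by (subst (asm) mult_le_cancel2) simp
  thus False using r_ge_5 by simp
qed

lemma Q_square: "Q * Q = p ^ k"
  using even_k unfolding Q_def by (metis dvd_mult_div_cancel mult_2 power_add)

lemma Q_ge_2: "Q \<ge> 2"
proof -
  have "p ^ 1 \<le> p ^ (k div 2)"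
    using k_pos even_k prime_gt_1_nat[OF prime_p] by (intro power_increasing) auto
  thus ?thesis using prime_ge_2_nat[OF prime_p] unfolding Q_def by simp
qed

lemma Q_square_minus_1: "(Q - 1) * (Q + 1) = p ^ k - 1"
proof -
  have "(Q - 1) * (Q + 1) = Q * Q - 1" using Q_ge_2 by (cases Q) (auto simp: algebra_simps)
  thus ?thesis by (simp only: Q_square)
qed

lemma prime_power_dvd_Q_plus_1: "r ^ m dvd Q + 1"
proof -
  have "r ^ m dvd p ^ k - 1"
    using cong_power_p_iff[of k] prime_gt_0_nat[OF prime_p] by (simp add: cong_altdef_nat)
  hence d: "r ^ m dvd (Q - 1) * (Q + 1)" by (simp only: Q_square_minus_1)
  show ?thesis
  proof (cases "r dvd Q + 1")
    case True
    have "\<not> r dvd Q - 1"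
    proof
      assume "r dvd Q - 1"
      with True have "r dvd (Q + 1) - (Q - 1)" by (rule dvd_diff_nat)
      hence "r dvd 2" using Q_ge_2 by simp
      thus False using r_ge_5 by (auto dest: dvd_imp_le)
    qed
    hence "coprime (r ^ m) (Q - 1)" using prime_r by (simp add: prime_imp_coprime)
    thus ?thesis using d coprime_dvd_mult_right_iff by blast
  next
    case False
    hence "coprime (r ^ m) (Q + 1)" using prime_r by (simp add: prime_imp_coprime)
    hence "r ^ m dvd Q - 1" using d coprime_dvd_mult_left_iff by blast
    hence "[Q = 1] (mod r ^ m)" using Q_ge_2 by (simp add: cong_altdef_nat)
    hence "k dvd k div 2" using cong_power_p_iff by (simp add: Q_def)
    thus ?thesis using k_pos even_k by (auto dest: dvd_imp_le)
  qed
qed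

lemma quadratic_subfield: "quadratic_subfield {x::'a. x ^ Q = x}"
proof (rule quadratic_subfield_fixed_points)
  show "card (UNIV :: 'a set) = Q * Q" using card_eq Q_square by simp
  show "Q = CHAR('a) ^ (k div 2)" using finite_field_CHAR_eq[OF prime_p card_eq] Q_def by simp
qed

lemma t_mult: "t * r ^ m = p ^ k - 1"
  using cong_power_p_iff[of k] prime_gt_0_nat[OF prime_p] by (simp add: t_def cong_altdef_nat)

lemma f_eq: "f x = Tr (x ^ t)"
  using f_def card_eq by (simp add: t_def k_def)

lemma f_scaling_invariant:
  assumes "c ^ Q = c" "c \<noteq> 0"
  shows "f (c * x) = f x"
proof -
  obtain j where j: "Q + 1 = r ^ m * j" using prime_power_dvd_Q_plus_1 by blast
  have "t * r ^ m = (Q - 1) * (Q + 1)" by (simp only: t_mult Q_square_minus_1)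
  also have "\<dots> = ((Q - 1) * j) * r ^ m" using j by (simp add: mult_ac)
  finally have "t = (Q - 1) * j" using r_ge_5 by simp
  moreover have "c * c ^ (Q - 1) = c * 1" using assms(1) Q_ge_2 by (simp flip: power_Suc)
  hence "c ^ (Q - 1) = 1" using assms(2) by simp
  ultimately have "c ^ t = 1" by (simp add: power_mult)
  thus ?thesis by (simp add: f_eq power_mult_distrib)
qed

lemma image_f: "f ` (UNIV - {0}) = Tr ` {z. z ^ r ^ m = 1}"
proof -
  have "f ` (UNIV - {0}) = Tr ` (\<lambda>x. x ^ t) ` (UNIV - {0})"
    by (simp add: f_eq image_image)
  moreover have "t * r ^ m = card (UNIV :: 'a set) - 1" using t_mult card_eq by simp
  ultimately show ?thesis using image_power_eq_roots_of_unity(1) by metis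
qed

lemma card_roots_of_unity_r_power:
  assumes "j \<le> m"
  shows "card {z::'a. z ^ r ^ j = 1} = r ^ j"
proof -
  have "r ^ m dvd p ^ k - 1" using t_mult by (metis dvd_triv_right)
  hence "r ^ j dvd p ^ k - 1" using assms le_imp_power_dvd dvd_trans by blast
  then obtain t' where "p ^ k - 1 = r ^ j * t'" by (rule dvdE)
  hence "t' * r ^ j = card (UNIV :: 'a set) - 1" using card_eq by (simp add: mult.commute)
  thus ?thesis by (rule image_power_eq_roots_of_unity(2))
qed

lemma trace_root_of_unity_order_r:
  assumes z: "z ^ r = 1"
  shows "Tr z = of_nat (r ^ (m - 1)) * period z"
proof -
  have "z ^ p ^ j = z ^ (p ^ (j mod e) mod r)" for j
  proof -
    have "[p ^ j = (p ^ e) ^ (j div e) * p ^ (j mod e)] (mod r)"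
      by (simp flip: power_mult power_add)
    also have "[(p ^ e) ^ (j div e) * p ^ (j mod e) = 1 ^ (j div e) * p ^ (j mod e)] (mod r)"
      using ord[of p r] ord_r_p by (intro cong_mult cong_pow) simp_all
    finally have "p ^ j mod r = p ^ (j mod e) mod r" by (simp add: cong_def)
    thus ?thesis using power_mod_if_power_eq_one[OF z] by metis
  qed
  hence "Tr z = (\<Sum>j<r ^ (m - 1) * e. (\<lambda>i. z ^ (p ^ i mod r)) (j mod e))"
    by (simp add: trace_Fp_def k_eq)
  also have "\<dots> = of_nat (r ^ (m - 1)) * (\<Sum>i<e. z ^ (p ^ i mod r))"
    by (rule sum_lessThan_mult_mod)
  also have "(\<Sum>i<e. z ^ (p ^ i mod r)) = (\<Sum>a\<in>(\<lambda>i. p ^ i mod r) ` {..<e}. z ^ a)"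
    using inj_power_mod[of r p] coprime_r_p ord_r_p by (simp add: sum.reindex)
  also have "\<dots> = period z"
    using QR_eq_powers[of p] ord_r_p by (simp add: period_def e_def)
  finally show ?thesis .
qed

lemma of_nat_r_neq_0: "(of_nat r :: 'a) \<noteq> 0"
  using not_p_dvd_r finite_field_CHAR_eq[OF prime_p card_eq] by (simp add: of_nat_eq_0_iff_char_dvd)

text \<open>For \<open>z\<close> of order \<open>r\<^sup>j\<close>, \<open>j \<ge> 2\<close>, a power of Frobenius fixing the \<open>r\<^sup>j\<^sup>-\<^sup>1\<close>-th roots of
  unity moves \<open>z\<close> by a primitive \<open>r\<close>-th root of unity.\<close>
lemma frobenius_twist_exists:
  assumes zm: "(z :: 'a) ^ r ^ m = 1" and zr: "z ^ r \<noteq> 1"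
  shows "\<exists>d w. w ^ r = 1 \<and> w \<noteq> 1 \<and> z ^ p ^ d = w * z \<and> w ^ p ^ d = w"
proof -
  obtain j where j: "2 \<le> j" "j \<le> m" "z ^ r ^ j = 1" "z ^ r ^ (j - 1) \<noteq> 1"
    using exact_prime_power_order[OF zm zr] by blast
  define d where "d = ord (r ^ (j - 1)) p"
  define N where "N = p ^ d - 1"
  have pd: "p ^ d = Suc N" using prime_gt_0_nat[OF prime_p] by (simp add: N_def)
  have "[p ^ d = 1] (mod r ^ (j - 1))" unfolding d_def by (rule ord)
  hence "r ^ (j - 1) dvd N"
    using prime_gt_0_nat[OF prime_p] unfolding N_def by (simp add: cong_altdef_nat)
  then obtain c where c: "N = r ^ (j - 1) * c" by (rule dvdE)
  define w where "w = z ^ N"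
  have "r ^ j = r ^ (j - 1) * r" using j(1) by (cases j) auto
  hence "N * r = r ^ j * c" using c by (simp add: mult_ac)
  hence "w ^ r = (z ^ r ^ j) ^ c" unfolding w_def by (simp only: power_mult[symmetric])
  hence wr: "w ^ r = 1" using j(3) by simp
  have "w \<noteq> 1"
  proof
    assume "w = 1"
    have Suc_j: "Suc (j - 1) = j" using j(1) by simp
    hence "z ^ r ^ Suc (j - 1) = 1" using j(3) by simp
    from prime_power_dvd_if_power_eq_one[OF prime_r this j(4)] \<open>w = 1\<close>
    have "r ^ Suc (j - 1) dvd N" by (simp add: w_def)
    hence "r ^ j dvd p ^ d - 1" unfolding Suc_j N_def .
    hence "[p ^ d = 1] (mod r ^ j)" using pd by (subst cong_altdef_nat) simp_all
    thus False using not_cong_ord_prime_power[OF j(1,2)] unfolding d_def by simp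
  qed
  moreover have "r dvd N" using c j(1) by simp
  then obtain c' where "N = r * c'" by (rule dvdE)
  hence "w ^ N = 1" using wr by (simp add: power_mult)
  hence "w ^ p ^ d = w" using pd by simp
  moreover have "z ^ p ^ d = w * z" using pd by (simp add: w_def)
  ultimately show ?thesis using wr by blast
qed

lemma trace_root_of_unity_high_order:
  assumes "(z :: 'a) ^ r ^ m = 1" "z ^ r \<noteq> 1"
  shows "Tr z = 0"
  using frobenius_twist_exists[OF assms]
    trace_Fp_eq_0_if_twisted[OF prime_p card_eq _ _ of_nat_r_neq_0] by blast

lemma Tr_one: "Tr 1 = of_nat k"
  by (rule trace_Fp_one[OF prime_p card_eq])

lemma root_of_unity_r_power:
  assumes "(z :: 'a) ^ r = 1"
  shows "z ^ r ^ m = 1"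
proof -
  have "r ^ m = r * r ^ (m - 1)" using m_pos by (cases m) auto
  hence "z ^ r ^ m = z ^ (r * r ^ (m - 1))" by simp
  also have "\<dots> = (z ^ r) ^ r ^ (m - 1)" by (rule power_mult)
  finally show ?thesis using assms by simp
qed

lemma primitive_root_of_unity_r_exists: "\<exists>\<xi>::'a. \<xi> ^ r = 1 \<and> \<xi> \<noteq> 1"
proof -
  have "\<not> {z::'a. z ^ r = 1} \<subseteq> {1}"
  proof
    assume "{z::'a. z ^ r = 1} \<subseteq> {1}"
    hence "card {z::'a. z ^ r = 1} \<le> card {1 :: 'a}" by (intro card_mono) simp_all
    thus False using card_roots_of_unity_r_power[of 1] m_pos r_ge_5 by simp
  qed
  thus ?thesis by auto
qed

lemma period_square:
  assumes "z ^ r = 1" "z \<noteq> 1"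
  shows "(2 * period z + 1) * (2 * period z + 1) = (of_nat r :: 'a)"
proof -
  have "4 dvd r - r mod 4" by (rule dvd_minus_mod)
  hence "4 dvd r - 1" using r_mod_4 by simp
  thus ?thesis using period_quadratic[OF assms] chi_minus_one by simp
qed

lemma period_cases:
  assumes \<xi>: "\<xi> ^ r = 1" "\<xi> \<noteq> 1" and z: "(z :: 'a) ^ r = 1" "z \<noteq> 1"
  shows "period z = period \<xi> \<or> period z = - 1 - period \<xi>"
proof -
  obtain a where a: "a < r" "z = \<xi> ^ a" using roots_of_unity_prime_eq_powers[OF prime_r \<xi> z(1)] by blast
  have "a \<noteq> 0"
  proof
    assume "a = 0"
    hence "z = 1" using a(2) by simp
    thus False using z(2) by simp
  qed
  hence "a \<in> U" using a(1) by (simp add: U_def)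
  hence "a \<in> QR \<or> a \<in> NQR" using U_eq_QR_Un_NQR by blast
  thus ?thesis
  proof
    assume "a \<in> QR"
    hence "period z = period \<xi>" using period_power[OF \<xi>(1), of a] a(2) by (simp add: QR_def)
    thus ?thesis ..
  next
    assume "a \<in> NQR"
    hence "period \<xi> + period z = - 1" using period_add_period_nonresidue[OF \<xi>] a(2) by simp
    hence "period z = - 1 - period \<xi>" by (metis add_diff_cancel_left')
    thus ?thesis ..
  qed
qed

lemma root_of_unity_high_order_exists:
  assumes "m \<noteq> 1"
  shows "\<exists>z :: 'a. z ^ r ^ m = 1 \<and> z ^ r \<noteq> 1"
proof -
  have "r ^ 1 < r ^ m" using assms m_pos r_ge_5 by (intro power_strict_increasing) auto
  hence less: "card {z::'a. z ^ r = 1} < card {z::'a. z ^ r ^ m = 1}"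
    using card_roots_of_unity_r_power[of 1] card_roots_of_unity_r_power[of m] m_pos by simp
  have "\<not> {z::'a. z ^ r ^ m = 1} \<subseteq> {z. z ^ r = 1}"
  proof
    assume "{z::'a. z ^ r ^ m = 1} \<subseteq> {z. z ^ r = 1}"
    hence "card {z::'a. z ^ r ^ m = 1} \<le> card {z::'a. z ^ r = 1}" by (intro card_mono) simp_all
    thus False using less by simp
  qed
  thus ?thesis by auto
qed

lemma trace_root_of_unity_cases:
  assumes \<xi>: "\<xi> ^ r = 1" "\<xi> \<noteq> 1" and zm: "(z :: 'a) ^ r ^ m = 1"
  shows "Tr z \<in> {of_nat k, of_nat (r ^ (m - 1)) * period \<xi>,
           of_nat (r ^ (m - 1)) * (- 1 - period \<xi>)} \<union> (if m = 1 then {} else {0})"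
proof -
  consider "z = 1" | "z ^ r = 1" "z \<noteq> 1" | "z ^ r \<noteq> 1" by blast
  thus ?thesis
  proof cases
    case 1
    thus ?thesis by (simp add: Tr_one)
  next
    case 2
    from period_cases[OF \<xi> 2] show ?thesis
      using trace_root_of_unity_order_r[OF 2(1)] by auto
  next
    case 3
    moreover have "m \<noteq> 1" using zm 3 by auto
    ultimately show ?thesis using trace_root_of_unity_high_order[OF zm] by simp
  qed
qed

lemma trace_image:
  assumes \<xi>: "\<xi> ^ r = 1" "\<xi> \<noteq> 1"
  shows "Tr ` {z. z ^ r ^ m = 1} = {of_nat k, of_nat (r ^ (m - 1)) * period \<xi>,
           of_nat (r ^ (m - 1)) * (- 1 - period \<xi>)} \<union> (if m = 1 then {} else {0})"
    (is "_ = ?V")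
proof
  show "Tr ` {z. z ^ r ^ m = 1} \<subseteq> ?V"
    using trace_root_of_unity_cases[OF \<xi>] by blast
  obtain b where b: "b \<in> NQR" using nonresidue_exists by blast
  have "(\<xi> ^ b) ^ r = (\<xi> ^ r) ^ b" by (simp only: power_mult[symmetric] mult.commute)
  hence \<xi>b: "(\<xi> ^ b) ^ r = 1" using \<xi>(1) by simp
  have "of_nat k \<in> Tr ` {z. z ^ r ^ m = 1}"
    by (rule image_eqI[of _ _ 1]) (simp_all add: Tr_one)
  moreover have "of_nat (r ^ (m - 1)) * period \<xi> \<in> Tr ` {z. z ^ r ^ m = 1}"
    using trace_root_of_unity_order_r[OF \<xi>(1)] root_of_unity_r_power[OF \<xi>(1)]
    by (intro image_eqI[of _ _ \<xi>]) simp_all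
  moreover have "of_nat (r ^ (m - 1)) * (- 1 - period \<xi>) \<in> Tr ` {z. z ^ r ^ m = 1}"
  proof (rule image_eqI)
    show "\<xi> ^ b \<in> {z. z ^ r ^ m = 1}" using root_of_unity_r_power[OF \<xi>b] by simp
    have "period (\<xi> ^ b) = - 1 - period \<xi>"
      using period_add_period_nonresidue[OF \<xi> b] by (metis add_diff_cancel_left')
    thus "of_nat (r ^ (m - 1)) * (- 1 - period \<xi>) = Tr (\<xi> ^ b)"
      using trace_root_of_unity_order_r[OF \<xi>b] by simp
  qed
  moreover have "0 \<in> Tr ` {z. z ^ r ^ m = 1}" if "m \<noteq> 1"
    using root_of_unity_high_order_exists[OF that] trace_root_of_unity_high_order by force
  ultimately show "?V \<subseteq> Tr ` {z. z ^ r ^ m = 1}" by (cases "m = 1") simp_all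
qed

lemma of_nat_eq_0_iff_p_dvd: "(of_nat n :: 'a) = 0 \<longleftrightarrow> p dvd n"
  using finite_field_CHAR_eq[OF prime_p card_eq] by (simp add: of_nat_eq_0_iff_char_dvd)

lemma of_nat_r_eq_1_iff: "(of_nat r :: 'a) = 1 \<longleftrightarrow> [r = 1] (mod p)"
proof -
  have "(of_nat r :: 'a) = of_nat (r - 1) + 1" using r_ge_5 by simp
  hence "(of_nat r :: 'a) = 1 \<longleftrightarrow> p dvd r - 1" by (simp add: of_nat_eq_0_iff_p_dvd)
  thus ?thesis using r_ge_5 by (simp add: cong_altdef_nat)
qed

lemma two_eq_0_iff: "(2 :: 'a) = 0 \<longleftrightarrow> p = 2"
proof -
  have "(2 :: 'a) = 0 \<longleftrightarrow> p dvd 2" using of_nat_eq_0_iff_p_dvd[of 2] by simp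
  also have "\<dots> \<longleftrightarrow> p = 2" using prime_ge_2_nat[OF prime_p] by (auto dest: dvd_imp_le)
  finally show ?thesis .
qed

lemma p_dvd_e_iff: "p dvd e \<longleftrightarrow> [r = 1] (mod p)"
proof -
  have "[r = 1] (mod p) \<longleftrightarrow> p dvd 2 * e" using r_ge_5 r_minus_1_eq by (simp add: cong_altdef_nat)
  also have "\<dots> \<longleftrightarrow> p dvd e"
  proof
    assume "p dvd 2 * e"
    hence "p dvd 2 \<or> p dvd e" using prime_p prime_dvd_mult_iff by blast
    moreover have "p = 2" if "p dvd 2" using that prime_p by (simp add: primes_dvd_imp_eq)
    ultimately show "p dvd e" using even_e by auto
  qed simp
  finally show ?thesis ..
qed

text \<open>In characteristic \<open>2\<close> the period is itself a trace, hence lies in \<open>\<bbbF>\<^sub>2\<close>; otherwise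
  \<open>4 s (s + 1) = (2 s + 1)\<^sup>2 - 1 = r - 1 = 0\<close>.\<close>
lemma period_eq_0_or_minus_1:
  assumes cong: "[r = 1] (mod p)" and \<xi>: "\<xi> ^ r = 1" "\<xi> \<noteq> 1"
  shows "period \<xi> = 0 \<or> period \<xi> = (- 1 :: 'a)"
proof -
  define s where "s = period \<xi>"
  have "s * (s + 1) = 0"
  proof (cases "p = 2")
    case True
    have "of_nat (r ^ (m - 1)) = (1 :: 'a)" using cong of_nat_r_eq_1_iff by simp
    hence "Tr \<xi> = s" using trace_root_of_unity_order_r[OF \<xi>(1)] unfolding s_def by simp
    moreover have "Tr \<xi> ^ p = Tr \<xi>" by (rule trace_Fp_power_p_eq[OF prime_p card_eq])
    ultimately have "s ^ p = s" by simp
    hence "s * s = s" using True by (simp only: power2_eq_square)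
    have "s * (s + 1) = s * s + s" by (simp add: algebra_simps)
    also have "\<dots> = 2 * s" unfolding \<open>s * s = s\<close> by (rule mult_2[symmetric])
    also have "\<dots> = 0" using True two_eq_0_iff by simp
    finally show ?thesis .
  next
    case False
    have "(2 * 2) * (s * (s + 1)) = (2 * s + 1) * (2 * s + 1) - 1" by (simp add: algebra_simps)
    also have "\<dots> = of_nat r - 1" unfolding s_def by (simp only: period_square[OF \<xi>])
    also have "\<dots> = 0" using cong of_nat_r_eq_1_iff by simp
    finally have "(2 * 2) * (s * (s + 1)) = 0" .
    moreover have "(2 * 2 :: 'a) \<noteq> 0" using False two_eq_0_iff by (simp only: mult_eq_0_iff) simp
    ultimately show ?thesis by simp
  qed
  thus ?thesis unfolding s_def by (auto simp: eq_neg_iff_add_eq_0)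
qed

lemma root_of_period_equation_neq:
  assumes "\<not> [r = 1] (mod p)" "(2 * x + 1) * (2 * x + 1) = (of_nat r :: 'a)"
  shows "x \<noteq> 0" "x \<noteq> of_nat e"
proof -
  have r: "(of_nat r :: 'a) \<noteq> 1" using assms(1) of_nat_r_eq_1_iff by simp
  thus "x \<noteq> 0" using assms(2) by auto
  show "x \<noteq> of_nat e"
  proof
    assume "x = of_nat e"
    moreover have "r = 2 * e + 1" using r_minus_1_eq r_ge_5 by simp
    hence "(of_nat r :: 'a) = of_nat (2 * e + 1)" by (rule arg_cong)
    ultimately have "2 * x + 1 = of_nat r" by simp
    hence "of_nat r * (of_nat r - 1) = (0 :: 'a)" using assms(2) by (simp add: algebra_simps)
    thus False using of_nat_r_neq_0 r by simp
  qed
qed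

lemma card_image_f:
  "card (f ` (UNIV - {0})) = (if [r = 1] (mod p) then 2 else if m = 1 then 3 else 4)"
proof -
  obtain \<xi> :: 'a where \<xi>: "\<xi> ^ r = 1" "\<xi> \<noteq> 1" using primitive_root_of_unity_r_exists by blast
  define s where "s = period \<xi>"
  define c :: 'a where "c = of_nat (r ^ (m - 1))"
  have image: "f ` (UNIV - {0}) = {of_nat k, c * s, c * (- 1 - s)} \<union> (if m = 1 then {} else {0})"
    unfolding image_f trace_image[OF \<xi>] s_def c_def ..
  show ?thesis
  proof (cases "[r = 1] (mod p)")
    case True
    have "c = 1" using True of_nat_r_eq_1_iff by (simp add: c_def)
    moreover have "(of_nat k :: 'a) = 0"
      using True p_dvd_e_iff by (simp add: of_nat_eq_0_iff_p_dvd k_eq)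
    moreover have "s = 0 \<or> s = - 1" unfolding s_def by (rule period_eq_0_or_minus_1[OF True \<xi>])
    ultimately have "{of_nat k, c * s, c * (- 1 - s)} = {0, - 1 :: 'a}" by auto
    hence "f ` (UNIV - {0}) = {0, - 1}" unfolding image by (cases "m = 1") auto
    thus ?thesis using True by simp
  next
    case False
    have sq: "(2 * s + 1) * (2 * s + 1) = of_nat r" unfolding s_def by (rule period_square[OF \<xi>])
    have "2 * (- 1 - s) + 1 = - (2 * s + 1)" by (simp add: algebra_simps)
    hence sq': "(2 * (- 1 - s) + 1) * (2 * (- 1 - s) + 1) = of_nat r" by (simp only: minus_mult_minus sq)
    have "s \<noteq> - 1 - s"
    proof
      assume "s = - 1 - s"
      hence "2 * s + 1 = 0" by (simp add: algebra_simps)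
      thus False using sq of_nat_r_neq_0 by simp
    qed
    moreover have c: "c \<noteq> 0" unfolding c_def using of_nat_r_neq_0 by simp
    moreover have "(of_nat e :: 'a) \<noteq> 0" using False p_dvd_e_iff of_nat_eq_0_iff_p_dvd by simp
    moreover have "(of_nat k :: 'a) = c * of_nat e" unfolding c_def k_eq by simp
    ultimately have "of_nat k \<noteq> c * s" "of_nat k \<noteq> c * (- 1 - s)" "c * s \<noteq> c * (- 1 - s)"
      "of_nat k \<noteq> (0 :: 'a)" "c * s \<noteq> 0" "c * (- 1 - s) \<noteq> 0"
      using root_of_period_equation_neq[OF False sq] root_of_period_equation_neq[OF False sq'] by auto
    thus ?thesis unfolding image using False by (cases "m = 1") simp_all
  qed
qed

end

theorem proposition4p8:
  fixes m r p :: nat and f :: "'a::{finite,field} \<Rightarrow> 'a"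
  assumes "m > 0" and "prime r" and "r mod 4 = 1" and "prime p"
    and "ord (r ^ m) p = totient (r ^ m) div 2"
    and "card (UNIV::'a set) = p ^ (totient (r ^ m) div 2)"
    and "f = (\<lambda>x. trace_Fp p (totient (r ^ m) div 2) (x ^ ((card (UNIV::'a set) - 1) div r ^ m)))"
  shows "((induces_assoc_scheme f 2 \<longleftrightarrow> card (f ` (UNIV - {0})) = 2)
           \<and> (card (f ` (UNIV - {0})) = 2 \<longleftrightarrow> [r = 1] (mod p)))
    \<and> ((induces_assoc_scheme f 3 \<longleftrightarrow> card (f ` (UNIV - {0})) = 3)
           \<and> (card (f ` (UNIV - {0})) = 3 \<longleftrightarrow> \<not> [r = 1] (mod p) \<and> m = 1))
    \<and> ((induces_assoc_scheme f 4 \<longleftrightarrow> card (f ` (UNIV - {0})) = 4)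
           \<and> (card (f ` (UNIV - {0})) = 4 \<longleftrightarrow> \<not> [r = 1] (mod p) \<and> m > 1))"
proof -
  interpret index_two_trace m r p f
    using assms by unfold_locales
  interpret quadratic_subfield "{x::'a. x ^ Q = x}"
    by (rule quadratic_subfield)
  have scheme: "induces_assoc_scheme f d \<longleftrightarrow> d = card (f ` (UNIV - {0}))" for d
    by (rule induces_assoc_scheme_iff_if_scaling_invariant) (auto intro: f_scaling_invariant)
  show ?thesis
    unfolding scheme card_image_f using m_pos by auto
qed

end
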